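(* Let $\mathcal{C}$ be a $((j,K,d))$ spin code and $n=2j$. Then the $n$-qubit code $\mathscr{D}(\mathcal{C})$ satisfies the Knill–Laflamme conditions for all spherical Pauli errors $\mathrm{Sph}(E)$ with $E$ an $n$-qubit Pauli operator of weight $<d$: for all $|u\rangle,|v\rangle\in\mathcal{C}$, $\langle u|\mathscr{D}^\dagger\mathrm{Sph}(E)\mathscr{D}|v\rangle=c_E\langle u|v\rangle$ with $c_E$ independent of $u,v$.
   Context: Spin $j$: the irrep $\mathcal{H}_j$ of $\mathrm{SU}(2)$ with basis $|j,m\rangle$. Spherical tensors $T^k_q=\sqrt{\tfrac{2k+1}{2j+1}}\sum_m C^{j\,m+q}_{k\,q,\,j\,m}|j,m+q\rangle\langle j,m|$. A $((j,K,d))$ spin code is a $K$-dimensional subspace of $\mathcal{H}_j$ with $\langle\phi|T^k_q|\psi\rangle=c_{k,q}\langle\phi|\psi\rangle$ for all codewords and all $k<d$, $|q|\le k$. The Dicke mapping $\mathscr{D}$ is the linear isometry $|j,m\rangle\mapsto|D^{2j}_{j-m}\rangle$, $|D^n_w\rangle$ the normalized uniform superposition of weight-$w$ computational basis states. For an $n$-qubit operator $A$ and permutation $\sigma\in S_n$ let $P_\sigma$ be the matrix permuting tensor factors; $\mathrm{Sym}(A)=\tfrac{1}{n!}\sum_{\sigma\in S_n}P_\sigma^\dagger AP_\sigma$. A Pauli $E$ of weight $w$ is uniquely a product $E=E_1\cdots E_w$ of weight-one Paulis (on distinct qubits), and $\mathrm{Sph}(E)=\mathrm{Sym}(E_1)\cdots\mathrm{Sym}(E_w)$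 (with $\mathrm{Sph}(I)=I$). *)

theory Defs
  imports "Jordan_Normal_Form.VS_Connect" "Jordan_Normal_Form.Schur_Decomposition"
          "HOL-Combinatorics.Permutations"
begin

section \<open>Clebsch-Gordan coefficients (Condon-Shortley convention, Racah formula)\<close>

text \<open>All angular momenta and projections are passed DOUBLED (as integers), so that
  half-integer values are representable.  cg tJ tM tj1 tm1 tj2 tm2 is the coefficient
  C^{J M}_{j1 m1, j2 m2} = <j1 m1; j2 m2 | J M> with tJ = 2J, tM = 2M, etc.
  It is zero unless all selection rules hold.\<close>

definition inv_fact_int :: "int \<Rightarrow> real" where
  "inv_fact_int x = (if x < 0 then 0 else 1 / fact (nat x))"

definition fact_int :: "int \<Rightarrow> real" where
  "fact_int x = fact (nat x)"

definition cg_valid :: "int \<Rightarrow> int \<Rightarrow> int \<Rightarrow> int \<Rightarrow> int \<Rightarrow> int \<Rightarrow> bool" where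
  "cg_valid tJ tM tj1 tm1 tj2 tm2 \<longleftrightarrow>
     tM = tm1 + tm2 \<and> 0 \<le> tj1 \<and> 0 \<le> tj2 \<and> 0 \<le> tJ \<and>
     \<bar>tm1\<bar> \<le> tj1 \<and> \<bar>tm2\<bar> \<le> tj2 \<and> \<bar>tM\<bar> \<le> tJ \<and>
     even (tj1 + tm1) \<and> even (tj2 + tm2) \<and> even (tJ + tM) \<and>
     \<bar>tj1 - tj2\<bar> \<le> tJ \<and> tJ \<le> tj1 + tj2 \<and> even (tj1 + tj2 + tJ)"

definition cg :: "int \<Rightarrow> int \<Rightarrow> int \<Rightarrow> int \<Rightarrow> int \<Rightarrow> int \<Rightarrow> real" where
  "cg tJ tM tj1 tm1 tj2 tm2 =
    (if cg_valid tJ tM tj1 tm1 tj2 tm2 then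
       sqrt (real_of_int (tJ + 1) * fact_int ((tJ + tj1 - tj2) div 2) * fact_int ((tJ - tj1 + tj2) div 2)
             * fact_int ((tj1 + tj2 - tJ) div 2) / fact_int ((tj1 + tj2 + tJ) div 2 + 1))
     * sqrt (fact_int ((tJ + tM) div 2) * fact_int ((tJ - tM) div 2)
             * fact_int ((tj1 - tm1) div 2) * fact_int ((tj1 + tm1) div 2)
             * fact_int ((tj2 - tm2) div 2) * fact_int ((tj2 + tm2) div 2))
     * (\<Sum>k\<in>{0..nat ((tj1 + tj2 - tJ) div 2)}.
          (-1) ^ k * inv_fact_int (int k)
          * inv_fact_int ((tj1 + tj2 - tJ) div 2 - int k)
          * inv_fact_int ((tj1 - tm1) div 2 - int k)
          * inv_fact_int ((tj2 + tm2) div 2 - int k)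
          * inv_fact_int ((tJ - tj2 + tm1) div 2 + int k)
          * inv_fact_int ((tJ - tj1 - tm2) div 2 + int k))
     else 0)"

section \<open>Spin j = n/2: the space H_j = C^(n+1)\<close>

text \<open>Basis vector with index a (0 \<le> a \<le> n) is |j, m> with m = j - a (so doubled m is n - 2a).\<close>

definition braket :: "complex vec \<Rightarrow> complex vec \<Rightarrow> complex" where
  "braket u v = (\<Sum>i<dim_vec u. cnj (u $ i) * v $ i)"

text \<open>Spherical tensor T^k_q on spin j = n/2.  Entry (b,a) is <j,m'|T^k_q|j,m>
  with m = j - a, m' = j - b, and it equals sqrt((2k+1)/(2j+1)) C^{j m'}_{k q, j m}
  (which vanishes unless m' = m + q).\<close>
definition sph_tensor :: "nat \<Rightarrow> nat \<Rightarrow> int \<Rightarrow> complex mat" where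
  "sph_tensor n k q = mat (n + 1) (n + 1) (\<lambda>(b, a).
      complex_of_real (sqrt ((2 * real k + 1) / (real n + 1))
        * cg (int n) (int n - 2 * int b) (2 * int k) (2 * q) (int n) (int n - 2 * int a)))"

definition spin_code :: "nat \<Rightarrow> nat \<Rightarrow> nat \<Rightarrow> complex vec set \<Rightarrow> bool" where
  "spin_code n K d C \<longleftrightarrow>
     VectorSpace.subspace class_ring C (module_vec TYPE(complex) (n + 1)) \<and>
     vectorspace.dim class_ring ((module_vec TYPE(complex) (n + 1))\<lparr>carrier := C\<rparr>) = K \<and>
     (\<forall>k < d. \<forall>q::int. \<bar>q\<bar> \<le> int k \<longrightarrow>
        (\<exists>c. \<forall>\<phi>\<in>C. \<forall>\<psi>\<in>C. braket \<phi> (sph_tensor n k q *\<^sub>v \<psi>) = c * braket \<phi> \<psi>))"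

section \<open>n qubits: C^(2^n), computational basis index x < 2^n, qubit i holds bit i of x\<close>

definition hamming_weight :: "nat \<Rightarrow> nat \<Rightarrow> nat" where
  "hamming_weight n x = card {i. i < n \<and> bit x i}"

definition dicke_vec :: "nat \<Rightarrow> nat \<Rightarrow> complex vec" where
  "dicke_vec n w = vec (2 ^ n) (\<lambda>x. if hamming_weight n x = w
       then complex_of_real (1 / sqrt (real (n choose w))) else 0)"

definition dicke_map :: "nat \<Rightarrow> complex mat" where
  "dicke_map n = mat (2 ^ n) (n + 1) (\<lambda>(x, a). dicke_vec n a $ x)"

text \<open>Single-qubit Paulis: 0 = I, 1 = X, 2 = Y, 3 = Z; arguments are (row bit, column bit),
  with bit True meaning |1>.\<close>
definition pauli1 :: "nat \<Rightarrow> bool \<Rightarrow> bool \<Rightarrow> complex" where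
  "pauli1 s r c =
     (if s = 0 then (if r = c then 1 else 0)
      else if s = 1 then (if r \<noteq> c then 1 else 0)
      else if s = 2 then (if r \<and> \<not> c then \<i> else if \<not> r \<and> c then - \<i> else 0)
      else (if r = c then (if r then -1 else 1) else 0))"

definition pauli :: "nat \<Rightarrow> (nat \<Rightarrow> nat) \<Rightarrow> complex mat" where
  "pauli n p = mat (2 ^ n) (2 ^ n) (\<lambda>(x, y). \<Prod>i<n. pauli1 (p i) (bit x i) (bit y i))"

definition is_pauli :: "nat \<Rightarrow> (nat \<Rightarrow> nat) \<Rightarrow> bool" where
  "is_pauli n p \<longleftrightarrow> (\<forall>i<n. p i < 4)"

definition pauli_support :: "nat \<Rightarrow> (nat \<Rightarrow> nat) \<Rightarrow> nat set" where
  "pauli_support n p = {i. i < n \<and> p i \<noteq> 0}"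

definition pauli_weight :: "nat \<Rightarrow> (nat \<Rightarrow> nat) \<Rightarrow> nat" where
  "pauli_weight n p = card (pauli_support n p)"

definition perm_mat :: "nat \<Rightarrow> (nat \<Rightarrow> nat) \<Rightarrow> complex mat" where
  "perm_mat n \<sigma> = mat (2 ^ n) (2 ^ n) (\<lambda>(x, y). if (\<forall>i<n. bit x i = bit y (\<sigma> i)) then 1 else 0)"

definition Sym :: "nat \<Rightarrow> complex mat \<Rightarrow> complex mat" where
  "Sym n A = mat (2 ^ n) (2 ^ n) (\<lambda>(x, y).
     (1 / fact n) * (\<Sum>\<sigma>\<in>{\<sigma>. \<sigma> permutes {..<n}}. (mat_adjoint (perm_mat n \<sigma>) * A * perm_mat n \<sigma>) $$ (x, y)))"

definition Sph :: "nat \<Rightarrow> (nat \<Rightarrow> nat) \<Rightarrow> complex mat" where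
  "Sph n p = foldr (\<lambda>i M. Sym n (pauli n (\<lambda>i'. if i' = i then p i else 0)) * M)
               (sorted_list_of_set (pauli_support n p)) (1\<^sub>m (2 ^ n))"

end

theory Submission
  imports Defs
begin

text \<open>Let E be the 2^n x (n + 1) matrix sending |a> to the sum of all basis states of Hamming
  weight a. The Dicke map is E followed by the normalisation 1 / sqrt (n choose a), so
  D* S D is the binomial rescaling of M whenever S E = E M.

  Symmetrising a single-qubit Pauli sigma_s averages it over the n sites, and the collective
  operator sum_l sigma_s^(l) satisfies (sum_l sigma_s^(l)) E = E J_s, where J_s is a combination
  of the ladder matrices and the weight matrix. Hence Sph(E) E = E M with M a product of
  w = wt(E) such matrices. Any such product is a sum of matrices supported on a single diagonal
  b - a = -q whose entries are (n - b) falling alpha times b falling beta with alpha + beta <= w;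
  after rescaling, each is a boundary factor times a polynomial in b of degree at most w - |q|.
  By the Racah formula, T^k_q has exactly this shape with a polynomial of exact degree k - |q|,
  so the T^k_q with k <= w span all these matrices, and the conditions for k < d transfer
  by linearity.\<close>

section \<open>Falling factorials\<close>

definition falling_fact :: "real \<Rightarrow> nat \<Rightarrow> real" where
  "falling_fact x m = (\<Prod>l<m. x - real l)"

lemma falling_fact_0 [simp]: "falling_fact x 0 = 1"
  by (simp add: falling_fact_def)

lemma falling_fact_Suc: "falling_fact x (Suc m) = falling_fact x m * (x - real m)"
  by (simp add: falling_fact_def)

lemma falling_fact_Suc_left: "falling_fact x (Suc m) = x * falling_fact (x - 1) m"
proof (induction m)
  case (Suc m)
  have "falling_fact x (Suc (Suc m)) = x * (falling_fact (x - 1) m * (x - 1 - real m))"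
    by (simp only: falling_fact_Suc[of x "Suc m"] Suc) (simp add: algebra_simps)
  then show ?case by (simp add: falling_fact_Suc)
qed (simp add: falling_fact_Suc)

lemma falling_fact_add: "falling_fact x (m + l) = falling_fact x m * falling_fact (x - real m) l"
proof (induction l)
  case (Suc l)
  have "falling_fact x (m + Suc l) = falling_fact x (m + l) * (x - real (m + l))"
    by (simp add: falling_fact_Suc)
  then show ?case
    using Suc by (simp add: falling_fact_Suc algebra_simps)
qed simp

lemma falling_fact_split: "m \<le> i \<Longrightarrow> falling_fact x i = falling_fact x m * falling_fact (x - real m) (i - m)"
  using falling_fact_add[of x m "i - m"] by simp

lemma falling_fact_plus_one:
  "falling_fact (x + 1) m = falling_fact x m + real m * falling_fact x (m - 1)"
proof (cases m)
  case (Suc m')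
  have "falling_fact (x + 1) (Suc m') = (x + 1) * falling_fact x m'"
    using falling_fact_Suc_left[of "x + 1" m'] by simp
  moreover have "falling_fact x (Suc m') = falling_fact x m' * (x - real m')"
    by (rule falling_fact_Suc)
  ultimately show ?thesis
    unfolding Suc by (simp add: algebra_simps)
qed simp

lemma falling_fact_of_nat_eq_0: "m < i \<Longrightarrow> falling_fact (real m) i = 0"
  unfolding falling_fact_def by (rule prod_zero) auto

lemma falling_fact_of_nat: "i \<le> m \<Longrightarrow> falling_fact (real m) i * fact (m - i) = fact m"
proof (induction i)
  case (Suc i)
  then have "m - i = Suc (m - Suc i)" by simp
  then have "fact (m - i) = real (m - i) * (fact (m - Suc i) :: real)"
    by (metis fact_Suc of_nat_fact of_nat_mult)
  moreover have "real (m - i) = real m - real i"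
    using Suc.prems by simp
  ultimately have "falling_fact (real m) (Suc i) * fact (m - Suc i) = falling_fact (real m) i * fact (m - i)"
    by (simp add: falling_fact_Suc)
  then show ?case
    using Suc by simp
qed simp

lemma fact_mult_inv_fact_int: "fact m * inv_fact_int (int m - int i) = falling_fact (real m) i"
proof (cases "i \<le> m")
  case True
  then have eq: "int m - int i = int (m - i)" by simp
  have "inv_fact_int (int m - int i) = 1 / fact (m - i)"
    unfolding eq inv_fact_int_def by simp
  then show ?thesis
    using falling_fact_of_nat[OF True]
    by (metis fact_nonzero nonzero_mult_div_cancel_right times_divide_eq_right mult.right_neutral)
qed (simp add: inv_fact_int_def falling_fact_of_nat_eq_0)

definition falling_fact_poly :: "real poly \<Rightarrow> nat \<Rightarrow> real poly" where
  "falling_fact_poly p m = (\<Prod>l<m. p - [:real l:])"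

lemma poly_falling_fact_poly: "poly (falling_fact_poly p m) x = falling_fact (poly p x) m"
  unfolding falling_fact_poly_def falling_fact_def by (simp add: poly_prod)

lemma degree_mult_le_sum:
  fixes p q :: "'a::comm_semiring_0 poly"
  shows "degree p \<le> a \<Longrightarrow> degree q \<le> b \<Longrightarrow> degree (p * q) \<le> a + b"
  using degree_mult_le[of p q] by linarith

lemma coeff_mult_at_degree_bound:
  fixes p q :: "'a::comm_semiring_0 poly"
  assumes "degree p \<le> a" "degree q \<le> b"
  shows "coeff (p * q) (a + b) = coeff p a * coeff q b"
proof (cases "degree p = a \<and> degree q = b")
  case True
  then show ?thesis by (metis coeff_mult_degree_sum)
next
  case False
  then have "degree p < a \<or> degree q < b"
    using assms by auto
  then have "coeff p a * coeff q b = 0"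
    by (auto simp: coeff_eq_0)
  moreover have "degree (p * q) < a + b"
    using degree_mult_le[of p q] False assms by linarith
  ultimately show ?thesis
    by (simp add: coeff_eq_0)
qed

lemma falling_fact_poly_degree:
  assumes "degree p \<le> 1"
  shows "degree (falling_fact_poly p m) \<le> m \<and> coeff (falling_fact_poly p m) m = coeff p 1 ^ m"
proof (induction m)
  case (Suc m)
  have eq: "falling_fact_poly p (Suc m) = falling_fact_poly p m * (p - [:real m:])"
    by (simp add: falling_fact_poly_def)
  have deg: "degree (p - [:real m:]) \<le> 1"
    using assms by (intro degree_diff_le) auto
  show ?case
    unfolding eq using degree_mult_le_sum[OF conjunct1[OF Suc.IH] deg]
      coeff_mult_at_degree_bound[OF conjunct1[OF Suc.IH] deg] Suc.IH by simp
qed (simp add: falling_fact_poly_def)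

section \<open>Weighted shift matrices\<close>

definition shift_mat :: "nat \<Rightarrow> int \<Rightarrow> (nat \<Rightarrow> real) \<Rightarrow> complex mat" where
  "shift_mat n q f = mat (n + 1) (n + 1) (\<lambda>(b, a). if int a = int b + q then complex_of_real (f b) else 0)"

lemma shift_mat_carrier [simp]: "shift_mat n q f \<in> carrier_mat (n + 1) (n + 1)"
  by (simp add: shift_mat_def)

lemma shift_mat_cong: "(\<And>b. b \<le> n \<Longrightarrow> f b = g b) \<Longrightarrow> shift_mat n q f = shift_mat n q g"
  unfolding shift_mat_def by (rule eq_matI) auto

lemma shift_mat_add: "shift_mat n q f + shift_mat n q g = shift_mat n q (\<lambda>b. f b + g b)"
  by (rule eq_matI) (auto simp: shift_mat_def)

lemma shift_mat_smult: "complex_of_real c \<cdot>\<^sub>m shift_mat n q f = shift_mat n q (\<lambda>b. c * f b)"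
  by (rule eq_matI) (auto simp: shift_mat_def)

lemma shift_mat_mult:
  assumes "\<And>b. b \<le> n \<Longrightarrow> \<not> (0 \<le> int b + q \<and> int b + q \<le> int n) \<Longrightarrow> f b = 0"
  shows "shift_mat n q f * shift_mat n r g = shift_mat n (q + r) (\<lambda>b. f b * g (nat (int b + q)))"
proof (rule eq_matI)
  fix b a
  assume "b < dim_row (shift_mat n (q + r) (\<lambda>b. f b * g (nat (int b + q))))"
    and "a < dim_col (shift_mat n (q + r) (\<lambda>b. f b * g (nat (int b + q))))"
  then have b: "b \<le> n" and a: "a \<le> n" by (simp_all add: shift_mat_def)
  have prod: "(shift_mat n q f * shift_mat n r g) $$ (b, a) =
      (\<Sum>c\<in>{0..<n + 1}. shift_mat n q f $$ (b, c) * shift_mat n r g $$ (c, a))"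
    using a b by (simp add: scalar_prod_def shift_mat_def)
  show "(shift_mat n q f * shift_mat n r g) $$ (b, a) =
      shift_mat n (q + r) (\<lambda>b. f b * g (nat (int b + q))) $$ (b, a)"
  proof (cases "0 \<le> int b + q \<and> int b + q \<le> int n")
    case True
    define c0 where "c0 = nat (int b + q)"
    have c0: "int c0 = int b + q" "c0 < n + 1" using True unfolding c0_def by auto
    have "(\<Sum>c\<in>{0..<n + 1}. shift_mat n q f $$ (b, c) * shift_mat n r g $$ (c, a)) =
        (\<Sum>c\<in>{0..<n + 1}. if c = c0 then complex_of_real (f b) * shift_mat n r g $$ (c0, a) else 0)"
      by (rule sum.cong) (use b c0 in \<open>auto simp: shift_mat_def\<close>)
    also have "\<dots> = complex_of_real (f b) * shift_mat n r g $$ (c0, a)"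
      using c0 by simp
    finally show ?thesis
      unfolding prod using a b c0 by (auto simp: shift_mat_def c0_def)
  next
    case False
    have "shift_mat n q f $$ (b, c) = 0" if "c < n + 1" for c
      using b that False by (auto simp: shift_mat_def)
    then show ?thesis
      unfolding prod using a b assms[OF b False] by (simp add: shift_mat_def)
  qed
qed (simp_all add: shift_mat_def)

definition binom_rescale :: "nat \<Rightarrow> complex mat \<Rightarrow> complex mat" where
  "binom_rescale n M = mat (n + 1) (n + 1) (\<lambda>(b, a).
      complex_of_real (sqrt (real (n choose b)) / sqrt (real (n choose a))) * M $$ (b, a))"

lemma binom_rescale_carrier [simp]: "binom_rescale n M \<in> carrier_mat (n + 1) (n + 1)"
  by (simp add: binom_rescale_def)

lemma binom_rescale_add:
  "A \<in> carrier_mat (n + 1) (n + 1) \<Longrightarrow> B \<in> carrier_mat (n + 1) (n + 1) \<Longrightarrow>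
    binom_rescale n (A + B) = binom_rescale n A + binom_rescale n B"
  by (rule eq_matI) (auto simp: binom_rescale_def algebra_simps add_divide_distrib)

lemma binom_rescale_smult:
  "A \<in> carrier_mat (n + 1) (n + 1) \<Longrightarrow> binom_rescale n (c \<cdot>\<^sub>m A) = c \<cdot>\<^sub>m binom_rescale n A"
  by (rule eq_matI) (auto simp: binom_rescale_def algebra_simps)

definition KL_condition :: "complex vec set \<Rightarrow> complex mat \<Rightarrow> bool" where
  "KL_condition C M \<longleftrightarrow> (\<exists>c. \<forall>u\<in>C. \<forall>v\<in>C. braket u (M *\<^sub>v v) = c * braket u v)"

lemma braket_add:
  "dim_vec x = dim_vec u \<Longrightarrow> dim_vec y = dim_vec u \<Longrightarrow> braket u (x + y) = braket u x + braket u y"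
  unfolding braket_def by (simp add: algebra_simps sum.distrib)

lemma braket_smult: "dim_vec x = dim_vec u \<Longrightarrow> braket u (c \<cdot>\<^sub>v x) = c * braket u x"
  unfolding braket_def by (simp add: sum_distrib_left algebra_simps)

lemma smult_mult_mat_vec:
  "A \<in> carrier_mat nr nc \<Longrightarrow> v \<in> carrier_vec nc \<Longrightarrow> (c \<cdot>\<^sub>m A) *\<^sub>v v = c \<cdot>\<^sub>v (A *\<^sub>v v)"
  by (intro eq_vecI) (auto simp: scalar_prod_def sum_distrib_left mult.assoc)

lemma KL_condition_add:
  assumes C: "C \<subseteq> carrier_vec N" and A: "A \<in> carrier_mat N N" and B: "B \<in> carrier_mat N N"
    and "KL_condition C A" "KL_condition C B"
  shows "KL_condition C (A + B)"
proof -
  obtain ca cb where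
    ca: "\<forall>u\<in>C. \<forall>v\<in>C. braket u (A *\<^sub>v v) = ca * braket u v" and
    cb: "\<forall>u\<in>C. \<forall>v\<in>C. braket u (B *\<^sub>v v) = cb * braket u v"
    using assms(4,5) unfolding KL_condition_def by blast
  have "braket u ((A + B) *\<^sub>v v) = (ca + cb) * braket u v" if "u \<in> C" "v \<in> C" for u v
  proof -
    have v: "v \<in> carrier_vec N" and u: "u \<in> carrier_vec N"
      using that C by auto
    have "braket u ((A + B) *\<^sub>v v) = braket u (A *\<^sub>v v) + braket u (B *\<^sub>v v)"
      unfolding add_mult_distrib_mat_vec[OF A B v] by (rule braket_add) (use A B u in auto)
    then show ?thesis
      using ca cb that by (simp add: algebra_simps)
  qed
  then show ?thesis
    unfolding KL_condition_def by blast
qed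

lemma KL_condition_smult:
  assumes C: "C \<subseteq> carrier_vec N" and A: "A \<in> carrier_mat N N" and "KL_condition C A"
  shows "KL_condition C (c \<cdot>\<^sub>m A)"
proof -
  obtain ca where ca: "\<forall>u\<in>C. \<forall>v\<in>C. braket u (A *\<^sub>v v) = ca * braket u v"
    using assms(3) unfolding KL_condition_def by blast
  have "braket u ((c \<cdot>\<^sub>m A) *\<^sub>v v) = (c * ca) * braket u v" if "u \<in> C" "v \<in> C" for u v
  proof -
    have "(c \<cdot>\<^sub>m A) *\<^sub>v v = c \<cdot>\<^sub>v (A *\<^sub>v v)"
      using that C A by (auto intro: smult_mult_mat_vec)
    then show ?thesis
      using ca that C A by (auto simp: braket_smult)
  qed
  then show ?thesis
    unfolding KL_condition_def by blast
qed

section \<open>Spherical tensors as weighted shift matrices\<close>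

lemma cg_valid_sph_tensor_iff:
  assumes "b \<le> n" "a \<le> n"
  shows "cg_valid (int n) (int n - 2 * int b) (2 * int k) (2 * q) (int n) (int n - 2 * int a)
     \<longleftrightarrow> int a = int b + q \<and> \<bar>q\<bar> \<le> int k \<and> k \<le> n"
proof -
  have "(int n - 2 * int b = 2 * q + (int n - 2 * int a)) = (int a = int b + q)"
    and "\<bar>int n - 2 * int a\<bar> \<le> int n" and "\<bar>int n - 2 * int b\<bar> \<le> int n"
    and "(\<bar>2 * q\<bar> \<le> 2 * int k) = (\<bar>q\<bar> \<le> int k)"
    and "(\<bar>2 * int k - int n\<bar> \<le> int n) = (k \<le> n)"
    and "int n \<le> 2 * int k + int n"
    using assms by linarith+
  then show ?thesis
    unfolding cg_valid_def by simp
qed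

lemma cg_sph_tensor:
  assumes "b \<le> n" "a \<le> n" "k \<le> n" "\<bar>q\<bar> \<le> int k" "int a = int b + q"
  shows "cg (int n) (int n - 2 * int b) (2 * int k) (2 * q) (int n) (int n - 2 * int a) =
    sqrt (real_of_int (int n + 1) * fact k * fact (n - k) * fact k / fact (n + k + 1))
    * sqrt (fact (n - b) * fact b * fact (nat (int k - q)) * fact (nat (int k + q)) * fact a * fact (n - a))
    * (\<Sum>t\<in>{0..k}. (-1) ^ t * inv_fact_int (int t) * inv_fact_int (int k - int t)
          * inv_fact_int (int k - q - int t) * inv_fact_int (int n - int a - int t)
          * inv_fact_int (q + int t) * inv_fact_int (int a - int k + int t))"
proof -
  have div2: "x = 2 * y \<Longrightarrow> x div 2 = y" for x y :: int
    by simp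
  have valid: "cg_valid (int n) (int n - 2 * int b) (2 * int k) (2 * q) (int n) (int n - 2 * int a)"
    using cg_valid_sph_tensor_iff[OF assms(1,2)] assms by simp
  have d1: "(int n + 2 * int k - int n) div 2 = int k" by (rule div2) simp
  have d2: "(int n - 2 * int k + int n) div 2 = int (n - k)" by (rule div2) (use assms in simp)
  have d3: "(2 * int k + int n - int n) div 2 = int k" by (rule div2) simp
  have d4: "(2 * int k + int n + int n) div 2 + 1 = int (n + k + 1)"
  proof -
    have "(2 * int k + int n + int n) div 2 = int n + int k" by (rule div2) simp
    then show ?thesis by simp
  qed
  have d5: "(int n + (int n - 2 * int b)) div 2 = int (n - b)" by (rule div2) (use assms in simp)
  have d6: "(int n - (int n - 2 * int b)) div 2 = int b" by (rule div2) simp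
  have d7: "(2 * int k - 2 * q) div 2 = int k - q" by (rule div2) simp
  have d8: "(2 * int k + 2 * q) div 2 = int k + q" by (rule div2) simp
  have d9: "(int n - (int n - 2 * int a)) div 2 = int a" by (rule div2) simp
  have d10: "(int n + (int n - 2 * int a)) div 2 = int (n - a)" by (rule div2) (use assms in simp)
  have d11: "(int n - int n + 2 * q) div 2 = q" by (rule div2) simp
  have d12: "(int n - 2 * int k - (int n - 2 * int a)) div 2 = int a - int k" by (rule div2) simp
  have na: "int (n - a) = int n - int a" and na2: "nat (int n - int a) = n - a"
    using assms by simp_all
  have fk: "fact_int (int k - q) = fact (nat (int k - q))" "fact_int (int k + q) = fact (nat (int k + q))"
    by (simp_all add: fact_int_def)
  show ?thesis
    unfolding cg_def using valid
    apply (simp only: if_True d1 d2 d3 d4 d5 d6 d7 d8 d9 d10 d11 d12 fk)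
    apply (simp only: fact_int_def nat_int na na2)
    done
qed

text \<open>The t-th Racah summand times b! (n - b)!, with the factorial quotients written as
  falling factorials in the weight b.\<close>

definition racah_term :: "nat \<Rightarrow> nat \<Rightarrow> int \<Rightarrow> nat \<Rightarrow> nat \<Rightarrow> real" where
  "racah_term n k q b t = (-1) ^ t / (fact t * fact (k - t)) *
     (if 0 \<le> q + int t \<and> 0 \<le> int k - q - int t then
        falling_fact (real (n - b)) (nat (q + int t)) * falling_fact (real b) (nat (int k - q - int t))
        / (fact (nat (q + int t)) * fact (nat (int k - q - int t)))
      else 0)"

lemma racah_term_eq:
  assumes "b \<le> n" "int a = int b + q" "t \<le> k"
  shows "fact b * fact (n - b) * ((-1) ^ t * inv_fact_int (int t) * inv_fact_int (int k - int t)
          * inv_fact_int (int k - q - int t) * inv_fact_int (int n - int a - int t)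
          * inv_fact_int (q + int t) * inv_fact_int (int a - int k + int t)) = racah_term n k q b t"
proof (cases "0 \<le> q + int t \<and> 0 \<le> int k - q - int t")
  case True
  define i where "i = nat (q + int t)"
  define j where "j = nat (int k - q - int t)"
  have hi: "int i = q + int t" and hj: "int j = int k - q - int t"
    using True unfolding i_def j_def by simp_all
  have nb: "int (n - b) = int n - int b" using assms(1) by simp
  have e1: "int n - int a - int t = int (n - b) - int i" using assms(2) hi nb by linarith
  have e2: "int a - int k + int t = int b - int j" using assms(2) hj by linarith
  have kt: "int k - int t = int (k - t)" using assms(3) by simp
  have g1: "inv_fact_int (int t) = 1 / fact t"
    by (simp add: inv_fact_int_def)
  have g2: "inv_fact_int (int k - int t) = 1 / fact (k - t)"
    unfolding kt inv_fact_int_def by simp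
  have g3: "inv_fact_int (q + int t) = 1 / fact i"
    unfolding hi[symmetric] inv_fact_int_def by simp
  have g4: "inv_fact_int (int k - q - int t) = 1 / fact j"
    unfolding hj[symmetric] inv_fact_int_def by simp
  have "fact b * fact (n - b) * ((-1) ^ t * inv_fact_int (int t) * inv_fact_int (int k - int t)
          * inv_fact_int (int k - q - int t) * inv_fact_int (int n - int a - int t)
          * inv_fact_int (q + int t) * inv_fact_int (int a - int k + int t))
      = (-1) ^ t * inv_fact_int (int t) * inv_fact_int (int k - int t)
          * inv_fact_int (int k - q - int t) * inv_fact_int (q + int t)
          * (fact (n - b) * inv_fact_int (int (n - b) - int i)) * (fact b * inv_fact_int (int b - int j))"
    unfolding e1 e2 by (simp only: mult_ac)
  also have "\<dots> = (-1) ^ t * (1 / fact t) * (1 / fact (k - t)) * (1 / fact j) * (1 / fact i)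
          * falling_fact (real (n - b)) i * falling_fact (real b) j"
    unfolding fact_mult_inv_fact_int g1 g2 g3 g4 by (simp only: mult_ac)
  also have "\<dots> = (-1) ^ t / (fact t * fact (k - t))
      * (falling_fact (real (n - b)) i * falling_fact (real b) j / (fact i * fact j))"
    by (simp add: mult_ac)
  also have "\<dots> = racah_term n k q b t"
    unfolding racah_term_def using True by (simp only: i_def j_def if_True simp_thms)
  finally show ?thesis .
next
  case False
  have "racah_term n k q b t = 0"
    unfolding racah_term_def by (simp only: False if_False mult_zero_right)
  moreover have "inv_fact_int (q + int t) = 0 \<or> inv_fact_int (int k - q - int t) = 0"
    using False by (auto simp: inv_fact_int_def)
  ultimately show ?thesis by auto
qed

definition racah_norm :: "nat \<Rightarrow> nat \<Rightarrow> int \<Rightarrow> real" where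
  "racah_norm n k q = sqrt ((2 * real k + 1) / (real n + 1))
     * sqrt (real_of_int (int n + 1) * fact k * fact (n - k) * fact k / fact (n + k + 1))
     * sqrt (fact (nat (int k - q)) * fact (nat (int k + q)))"

lemma racah_norm_pos: "racah_norm n k q > 0"
  unfolding racah_norm_def by (intro mult_pos_pos real_sqrt_gt_zero) auto

lemma sqrt_quotient_rescale:
  fixes P Q N Z :: real
  assumes "P > 0" "Q > 0" "N > 0"
  shows "sqrt (N / P) / sqrt (N / Q) * P * sqrt Z = sqrt (P * Q * Z)"
proof -
  have "sqrt (N / P) / sqrt (N / Q) = sqrt (Q / P)"
    unfolding real_sqrt_divide[symmetric] using assms by (simp add: field_simps)
  moreover have "P = sqrt (P * P)" using assms by simp
  ultimately have "sqrt (N / P) / sqrt (N / Q) * P * sqrt Z = sqrt (Q / P * (P * P) * Z)"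
    by (metis real_sqrt_mult)
  also have "Q / P * (P * P) * Z = P * Q * Z" using assms by (simp add: field_simps)
  finally show ?thesis .
qed

lemma sph_tensor_entry:
  assumes "b \<le> n" "a \<le> n" "k \<le> n" "\<bar>q\<bar> \<le> int k" "int a = int b + q"
  shows "sph_tensor n k q $$ (b, a) = complex_of_real (sqrt (real (n choose b)) / sqrt (real (n choose a))
           * (racah_norm n k q * (\<Sum>t\<in>{0..k}. racah_term n k q b t)))"
proof -
  define R where "R = (\<Sum>t\<in>{0..k}. (-1) ^ t * inv_fact_int (int t) * inv_fact_int (int k - int t)
          * inv_fact_int (int k - q - int t) * inv_fact_int (int n - int a - int t)
          * inv_fact_int (q + int t) * inv_fact_int (int a - int k + int t))"
  define P :: real where "P = fact b * fact (n - b)"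
  define Q :: real where "Q = fact a * fact (n - a)"
  define Z :: real where "Z = fact (nat (int k - q)) * fact (nat (int k + q))"
  have P0: "P > 0" and Q0: "Q > 0" unfolding P_def Q_def by simp_all
  have Cb: "real (n choose b) = fact n / P" unfolding P_def using binomial_fact[OF assms(1)] by simp
  have Ca: "real (n choose a) = fact n / Q" unfolding Q_def using binomial_fact[OF assms(2)] by simp
  have S: "(\<Sum>t\<in>{0..k}. racah_term n k q b t) = P * R"
    unfolding R_def sum_distrib_left P_def
    by (rule sum.cong) (use racah_term_eq[OF assms(1) assms(5)] in auto)
  have S2: "sqrt (fact (n - b) * fact b * fact (nat (int k - q)) * fact (nat (int k + q)) * fact a * fact (n - a))
      = sqrt (real (n choose b)) / sqrt (real (n choose a)) * P * sqrt Z"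
    unfolding Cb Ca sqrt_quotient_rescale[OF P0 Q0 fact_gt_zero] unfolding P_def Q_def Z_def
    by (simp only: mult_ac)
  have "sph_tensor n k q $$ (b, a) = complex_of_real (sqrt ((2 * real k + 1) / (real n + 1))
      * cg (int n) (int n - 2 * int b) (2 * int k) (2 * q) (int n) (int n - 2 * int a))"
    unfolding sph_tensor_def using assms by simp
  also have "\<dots> = complex_of_real (sqrt (real (n choose b)) / sqrt (real (n choose a))
           * (racah_norm n k q * (\<Sum>t\<in>{0..k}. racah_term n k q b t)))"
    unfolding cg_sph_tensor[OF assms] S2 S racah_norm_def R_def[symmetric] Z_def by (simp only: mult_ac)
  finally show ?thesis .
qed

lemma sph_tensor_entry_eq_0:
  assumes "b \<le> n" "a \<le> n" "int a \<noteq> int b + q"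
  shows "sph_tensor n k q $$ (b, a) = 0"
proof -
  have "\<not> cg_valid (int n) (int n - 2 * int b) (2 * int k) (2 * q) (int n) (int n - 2 * int a)"
    using cg_valid_sph_tensor_iff[OF assms(1,2)] assms(3) by simp
  then show ?thesis
    unfolding sph_tensor_def cg_def using assms by simp
qed

text \<open>Every entry of T^k_q on the q-th diagonal has the factor boundary_factor n q b, which
  vanishes exactly where b + q leaves {0..n}; the remaining factor is a polynomial in b.\<close>

definition boundary_factor :: "nat \<Rightarrow> int \<Rightarrow> nat \<Rightarrow> real" where
  "boundary_factor n q b = falling_fact (real (n - b)) (nat q) * falling_fact (real b) (nat (- q))"

definition racah_summand_poly :: "nat \<Rightarrow> nat \<Rightarrow> int \<Rightarrow> nat \<Rightarrow> real poly" where
  "racah_summand_poly n k q t =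
    (if 0 \<le> q + int t \<and> 0 \<le> int k - q - int t then
      smult ((-1) ^ t / (fact t * fact (k - t) * fact (nat (q + int t)) * fact (nat (int k - q - int t))))
        (falling_fact_poly [:real n - real (nat q), -1:] (t - nat (- q))
         * falling_fact_poly [:- real (nat (- q)), 1:] (nat (int k - q - int t) - nat (- q)))
     else 0)"

definition racah_poly :: "nat \<Rightarrow> nat \<Rightarrow> int \<Rightarrow> real poly" where
  "racah_poly n k q = smult (racah_norm n k q) (\<Sum>t\<in>{0..k}. racah_summand_poly n k q t)"

lemma racah_term_eq_poly:
  assumes "b \<le> n" "t \<le> k"
  shows "racah_term n k q b t = boundary_factor n q b * poly (racah_summand_poly n k q t) (real b)"
proof (cases "0 \<le> q + int t \<and> 0 \<le> int k - q - int t")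
  case True
  then have le1: "nat q \<le> nat (q + int t)" and le2: "nat (- q) \<le> nat (int k - q - int t)"
    and eq: "nat (q + int t) - nat q = t - nat (- q)"
    using assms(2) by auto
  have nb: "real (n - b) - real (nat q) = real n - real (nat q) - real b"
    using assms(1) by (simp add: of_nat_diff)
  have "racah_term n k q b t = (-1) ^ t / (fact t * fact (k - t)) *
        (falling_fact (real (n - b)) (nat (q + int t)) * falling_fact (real b) (nat (int k - q - int t))
        / (fact (nat (q + int t)) * fact (nat (int k - q - int t))))"
    unfolding racah_term_def using True by simp
  also have "\<dots> = boundary_factor n q b * ((-1) ^ t / (fact t * fact (k - t) * fact (nat (q + int t))
      * fact (nat (int k - q - int t))) * (falling_fact (real n - real (nat q) - real b) (t - nat (- q)) *
      falling_fact (real b - real (nat (- q))) (nat (int k - q - int t) - nat (- q))))"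
    unfolding falling_fact_split[OF le1, of "real (n - b)"] falling_fact_split[OF le2, of "real b"]
      boundary_factor_def eq nb by (simp add: field_simps)
  also have "\<dots> = boundary_factor n q b * poly (racah_summand_poly n k q t) (real b)"
    unfolding racah_summand_poly_def using True by (simp add: poly_falling_fact_poly)
  finally show ?thesis .
next
  case False
  then show ?thesis
    by (simp only: racah_term_def racah_summand_poly_def if_False) simp
qed

lemma sph_tensor_eq_shift_mat:
  assumes "k \<le> n" "\<bar>q\<bar> \<le> int k"
  shows "sph_tensor n k q =
    binom_rescale n (shift_mat n q (\<lambda>b. boundary_factor n q b * poly (racah_poly n k q) (real b)))"
proof (rule eq_matI)
  fix b a
  assume "b < dim_row (binom_rescale n (shift_mat n q (\<lambda>b. boundary_factor n q b * poly (racah_poly n k q) (real b))))"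
    and "a < dim_col (binom_rescale n (shift_mat n q (\<lambda>b. boundary_factor n q b * poly (racah_poly n k q) (real b))))"
  then have b: "b \<le> n" and a: "a \<le> n" by (simp_all add: binom_rescale_def)
  show "sph_tensor n k q $$ (b, a) =
      binom_rescale n (shift_mat n q (\<lambda>b. boundary_factor n q b * poly (racah_poly n k q) (real b))) $$ (b, a)"
  proof (cases "int a = int b + q")
    case True
    have "racah_norm n k q * (\<Sum>t\<in>{0..k}. racah_term n k q b t) =
        boundary_factor n q b * poly (racah_poly n k q) (real b)"
      unfolding racah_poly_def using racah_term_eq_poly[OF b]
      by (simp add: poly_sum sum_distrib_left algebra_simps)
    then show ?thesis
      unfolding sph_tensor_entry[OF b a assms True] using a b True
      by (simp add: binom_rescale_def shift_mat_def of_real_mult)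
  next
    case False
    then show ?thesis
      unfolding sph_tensor_entry_eq_0[OF b a False] using a b
      by (simp add: binom_rescale_def shift_mat_def)
  qed
qed (simp_all add: sph_tensor_def binom_rescale_def)

lemma racah_summand_poly_degree:
  assumes "t \<le> k"
  shows "degree (racah_summand_poly n k q t) \<le> k - nat \<bar>q\<bar>"
    and "coeff (racah_summand_poly n k q t) (k - nat \<bar>q\<bar>) =
      (if 0 \<le> q + int t \<and> 0 \<le> int k - q - int t then (-1) ^ nat (- q) /
        (fact t * fact (k - t) * fact (nat (q + int t)) * fact (nat (int k - q - int t))) else 0)"
proof -
  have "degree (racah_summand_poly n k q t) \<le> k - nat \<bar>q\<bar> \<and>
    coeff (racah_summand_poly n k q t) (k - nat \<bar>q\<bar>) =
      (if 0 \<le> q + int t \<and> 0 \<le> int k - q - int t then (-1) ^ nat (- q) /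
        (fact t * fact (k - t) * fact (nat (q + int t)) * fact (nat (int k - q - int t))) else 0)"
  proof (cases "0 \<le> q + int t \<and> 0 \<le> int k - q - int t")
    case True
    define i where "i = t - nat (- q)"
    define j where "j = nat (int k - q - int t) - nat (- q)"
    define c where "c = (-1::real) ^ t / (fact t * fact (k - t) * fact (nat (q + int t)) * fact (nat (int k - q - int t)))"
    have D: "k - nat \<bar>q\<bar> = i + j"
      using True assms unfolding i_def j_def by auto
    have "nat (- q) \<le> t"
      using True by auto
    then obtain s where s: "t = nat (- q) + s"
      using le_Suc_ex by blast
    have "(-1::real) ^ s * (-1) ^ s = 1"
      by (simp add: power_mult_distrib[symmetric])
    then have sign: "(-1::real) ^ t * (-1) ^ i = (-1) ^ nat (- q)"
      unfolding i_def s by (simp add: power_add)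
    have A: "degree (falling_fact_poly [:real n - real (nat q), -1:] i) \<le> i"
        "coeff (falling_fact_poly [:real n - real (nat q), -1:] i) i = (-1) ^ i"
      using falling_fact_poly_degree[of "[:real n - real (nat q), -1:]" i] by simp_all
    have B: "degree (falling_fact_poly [:- real (nat (- q)), 1:] j) \<le> j"
        "coeff (falling_fact_poly [:- real (nat (- q)), 1:] j) j = 1"
      using falling_fact_poly_degree[of "[:- real (nat (- q)), 1:]" j] by simp_all
    have eq: "racah_summand_poly n k q t = smult c (falling_fact_poly [:real n - real (nat q), -1:] i
        * falling_fact_poly [:- real (nat (- q)), 1:] j)"
      unfolding racah_summand_poly_def c_def i_def j_def using True by simp
    have "degree (racah_summand_poly n k q t) \<le> i + j"
      unfolding eq by (rule le_trans[OF degree_smult_le degree_mult_le_sum[OF A(1) B(1)]])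
    moreover have "c * (-1) ^ i = (-1) ^ nat (- q) /
        (fact t * fact (k - t) * fact (nat (q + int t)) * fact (nat (int k - q - int t)))"
      unfolding c_def using sign by (simp add: field_simps)
    ultimately show ?thesis
      unfolding D eq using True coeff_mult_at_degree_bound[OF A(1) B(1)] A(2) B(2) by simp
  next
    case False
    then show ?thesis
      by (simp only: racah_summand_poly_def if_False) simp
  qed
  then show "degree (racah_summand_poly n k q t) \<le> k - nat \<bar>q\<bar>"
    and "coeff (racah_summand_poly n k q t) (k - nat \<bar>q\<bar>) =
      (if 0 \<le> q + int t \<and> 0 \<le> int k - q - int t then (-1) ^ nat (- q) /
        (fact t * fact (k - t) * fact (nat (q + int t)) * fact (nat (int k - q - int t))) else 0)"
    by simp_all
qed

lemma racah_poly_degree: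
  assumes "\<bar>q\<bar> \<le> int k"
  shows "degree (racah_poly n k q) \<le> k - nat \<bar>q\<bar>" and "coeff (racah_poly n k q) (k - nat \<bar>q\<bar>) \<noteq> 0"
proof -
  show "degree (racah_poly n k q) \<le> k - nat \<bar>q\<bar>"
    unfolding racah_poly_def
    by (rule le_trans[OF degree_smult_le], rule degree_sum_le) (use racah_summand_poly_degree(1) in auto)
  define S where "S = (\<Sum>t\<in>{0..k}. if 0 \<le> q + int t \<and> 0 \<le> int k - q - int t then
      1 / (fact t * fact (k - t) * fact (nat (q + int t)) * fact (nat (int k - q - int t))) else (0::real))"
  have "coeff (racah_poly n k q) (k - nat \<bar>q\<bar>) = racah_norm n k q * ((-1) ^ nat (- q) * S)"
    unfolding racah_poly_def coeff_smult coeff_sum S_def sum_distrib_left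
    by (rule sum.cong) (auto simp: racah_summand_poly_degree(2))
  moreover have "S > 0"
    unfolding S_def using assms by (intro sum_pos2[of _ "nat (- q)"]) auto
  ultimately show "coeff (racah_poly n k q) (k - nat \<bar>q\<bar>) \<noteq> 0"
    using racah_norm_pos[of n k q] by simp
qed

lemma poly_induct_exact_degrees [consumes 1, case_names exact add smult]:
  fixes P :: "'a::field poly \<Rightarrow> bool"
  assumes "degree h \<le> M"
    and exact: "\<And>m. m \<le> M \<Longrightarrow> \<exists>Q. degree Q \<le> m \<and> coeff Q m \<noteq> 0 \<and> P Q"
    and add: "\<And>f g. P f \<Longrightarrow> P g \<Longrightarrow> P (f + g)"
    and smult: "\<And>c f. P f \<Longrightarrow> P (smult c f)"
  shows "P h"
  using exact \<open>degree h \<le> M\<close>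
proof (induction M arbitrary: h)
  case 0
  obtain Q where Q: "degree Q \<le> 0" "coeff Q 0 \<noteq> 0" "P Q"
    using "0.prems"(1)[of 0] by auto
  have "h = [:coeff h 0:]" "Q = [:coeff Q 0:]"
    using "0.prems"(2) Q(1) by (auto elim: degree_eq_zeroE)
  then have "h = smult (coeff h 0 / coeff Q 0) Q"
    using Q(2) by (metis mult.commute nonzero_divide_eq_eq smult_pCons smult_0_right)
  then show ?case
    using smult[OF Q(3)] by metis
next
  case (Suc M)
  obtain Q where Q: "degree Q \<le> Suc M" "coeff Q (Suc M) \<noteq> 0" "P Q"
    using Suc.prems(1)[of "Suc M"] by auto
  define c where "c = coeff h (Suc M) / coeff Q (Suc M)"
  define h' where "h' = h - smult c Q"
  have "degree h' \<le> Suc M"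
    unfolding h'_def using Suc.prems(2) Q(1) by (intro degree_diff_le) (auto intro: le_trans[OF degree_smult_le])
  moreover have "coeff h' (Suc M) = 0"
    unfolding h'_def c_def using Q(2) by simp
  ultimately have "degree h' \<le> M"
    by (metis Suc_leI degree_le le_antisym le_degree not_less_eq_eq leading_coeff_0_iff degree_0 le_zero_eq)
  then have "P h'"
    using Suc.IH Suc.prems(1) by auto
  moreover have "h = h' + smult c Q"
    unfolding h'_def by simp
  ultimately show ?case
    using add smult[OF Q(3)] by metis
qed

lemma KL_condition_shift_poly:
  assumes C: "C \<subseteq> carrier_vec (n + 1)"
    and T: "\<And>k q. k \<le> w \<Longrightarrow> \<bar>q\<bar> \<le> int k \<Longrightarrow> KL_condition C (sph_tensor n k q)"
    and "w \<le> n" "nat \<bar>q\<bar> \<le> w" "degree h \<le> w - nat \<bar>q\<bar>"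
  shows "KL_condition C (binom_rescale n (shift_mat n q (\<lambda>b. boundary_factor n q b * poly h (real b))))"
  using \<open>degree h \<le> w - nat \<bar>q\<bar>\<close>
proof (induction h rule: poly_induct_exact_degrees)
  case (exact m)
  define k where "k = nat \<bar>q\<bar> + m"
  have k: "k \<le> w" "\<bar>q\<bar> \<le> int k" and m: "m = k - nat \<bar>q\<bar>"
    using exact assms(4) unfolding k_def by auto
  have "KL_condition C (binom_rescale n (shift_mat n q
      (\<lambda>b. boundary_factor n q b * poly (racah_poly n k q) (real b))))"
    using T[OF k] sph_tensor_eq_shift_mat[of k n q] k \<open>w \<le> n\<close> by simp
  then show ?case
    unfolding m using racah_poly_degree[OF k(2)] by blast
next
  case (add f g)
  have "binom_rescale n (shift_mat n q (\<lambda>b. boundary_factor n q b * poly (f + g) (real b))) =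
      binom_rescale n (shift_mat n q (\<lambda>b. boundary_factor n q b * poly f (real b))) +
      binom_rescale n (shift_mat n q (\<lambda>b. boundary_factor n q b * poly g (real b)))"
    unfolding poly_add distrib_left shift_mat_add[symmetric] by (rule binom_rescale_add) (rule shift_mat_carrier)+
  then show ?case
    using KL_condition_add[OF C binom_rescale_carrier binom_rescale_carrier add] by simp
next
  case (smult c f)
  have "binom_rescale n (shift_mat n q (\<lambda>b. boundary_factor n q b * poly (Polynomial.smult c f) (real b))) =
      complex_of_real c \<cdot>\<^sub>m binom_rescale n (shift_mat n q (\<lambda>b. boundary_factor n q b * poly f (real b)))"
    unfolding binom_rescale_smult[OF shift_mat_carrier, symmetric] shift_mat_smult
    by (simp add: mult.left_commute)
  then show ?case
    using KL_condition_smult[OF C binom_rescale_carrier smult] by simp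
qed

section \<open>Products of ladder operators\<close>

definition ladder_term :: "nat \<Rightarrow> nat \<Rightarrow> nat \<Rightarrow> int \<Rightarrow> complex mat" where
  "ladder_term n \<alpha> \<beta> q = shift_mat n q (\<lambda>b. falling_fact (real (n - b)) \<alpha> * falling_fact (real b) \<beta>)"

lemma KL_condition_ladder_term:
  assumes C: "C \<subseteq> carrier_vec (n + 1)"
    and T: "\<And>k q. k \<le> w \<Longrightarrow> \<bar>q\<bar> \<le> int k \<Longrightarrow> KL_condition C (sph_tensor n k q)"
    and "w \<le> n" "\<alpha> + \<beta> \<le> w" "- int \<beta> \<le> q" "q \<le> int \<alpha>"
  shows "KL_condition C (binom_rescale n (ladder_term n \<alpha> \<beta> q))"
proof -
  have le: "nat q \<le> \<alpha>" "nat (- q) \<le> \<beta>" and q: "nat \<bar>q\<bar> = nat q + nat (- q)"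
    using assms(5,6) by auto
  define h where "h = falling_fact_poly [:real n - real (nat q), -1:] (\<alpha> - nat q)
      * falling_fact_poly [:- real (nat (- q)), 1:] (\<beta> - nat (- q))"
  have "degree h \<le> (\<alpha> - nat q) + (\<beta> - nat (- q))"
    unfolding h_def by (rule degree_mult_le_sum) (simp_all add: falling_fact_poly_degree)
  also have "\<dots> \<le> w - nat \<bar>q\<bar>"
    using le q assms(4) by linarith
  finally have deg: "degree h \<le> w - nat \<bar>q\<bar>" .
  have "ladder_term n \<alpha> \<beta> q = shift_mat n q (\<lambda>b. boundary_factor n q b * poly h (real b))"
    unfolding ladder_term_def
  proof (rule shift_mat_cong)
    fix b assume "b \<le> n"
    then have nb: "real (n - b) - real (nat q) = real n - real (nat q) - real b"
      by (simp add: of_nat_diff)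
    show "falling_fact (real (n - b)) \<alpha> * falling_fact (real b) \<beta> =
        boundary_factor n q b * poly h (real b)"
      unfolding h_def boundary_factor_def poly_mult poly_falling_fact_poly
        falling_fact_split[OF le(1), of "real (n - b)"] falling_fact_split[OF le(2), of "real b"] nb
      by simp
  qed
  then show ?thesis
    using KL_condition_shift_poly[OF C T assms(3) _ deg] q le assms(4) by simp
qed

text \<open>The ladder terms with \<alpha> + \<beta> \<le> w span all products of at most w of the matrices
  lowering_mat, raising_mat and weight_mat defined below.\<close>

inductive ladder_span :: "nat \<Rightarrow> nat \<Rightarrow> complex mat \<Rightarrow> bool" for n w where
  generator: "\<alpha> + \<beta> \<le> w \<Longrightarrow> - int \<beta> \<le> q \<Longrightarrow> q \<le> int \<alpha> \<Longrightarrow> ladder_span n w (ladder_term n \<alpha> \<beta> q)"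
| add: "ladder_span n w A \<Longrightarrow> ladder_span n w B \<Longrightarrow> ladder_span n w (A + B)"
| smult: "ladder_span n w A \<Longrightarrow> ladder_span n w (c \<cdot>\<^sub>m A)"

lemma ladder_span_carrier: "ladder_span n w A \<Longrightarrow> A \<in> carrier_mat (n + 1) (n + 1)"
  by (induction rule: ladder_span.induct) (auto simp: ladder_term_def shift_mat_def)

lemma ladder_span_mono: "ladder_span n w A \<Longrightarrow> w \<le> w' \<Longrightarrow> ladder_span n w' A"
  by (induction rule: ladder_span.induct) (auto intro: ladder_span.intros)

lemma KL_condition_ladder_span:
  assumes C: "C \<subseteq> carrier_vec (n + 1)"
    and T: "\<And>k q. k \<le> w \<Longrightarrow> \<bar>q\<bar> \<le> int k \<Longrightarrow> KL_condition C (sph_tensor n k q)"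
    and "w \<le> n" "ladder_span n w A"
  shows "KL_condition C (binom_rescale n A)"
  using \<open>ladder_span n w A\<close>
proof (induction rule: ladder_span.induct)
  case (generator \<alpha> \<beta> q)
  then show ?case
    using KL_condition_ladder_term[OF C T \<open>w \<le> n\<close>, of \<alpha> \<beta> q] by blast
next
  case (add A B)
  then show ?case
    unfolding binom_rescale_add[OF ladder_span_carrier[OF add.hyps(1)] ladder_span_carrier[OF add.hyps(2)]]
    by (intro KL_condition_add[OF C binom_rescale_carrier binom_rescale_carrier])
next
  case (smult A c)
  then show ?case
    unfolding binom_rescale_smult[OF ladder_span_carrier[OF smult.hyps]]
    by (intro KL_condition_smult[OF C binom_rescale_carrier])
qed

lemma ladder_span_one: "ladder_span n 0 (1\<^sub>m (n + 1))"
proof -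
  have "ladder_term n 0 0 0 = 1\<^sub>m (n + 1)"
    by (rule eq_matI) (auto simp: ladder_term_def shift_mat_def)
  then show ?thesis
    using ladder_span.generator[of 0 0 0 0 n] by simp
qed

lemma ladder_span_mult_left:
  assumes M: "M \<in> carrier_mat (n + 1) (n + 1)"
    and step: "\<And>\<alpha> \<beta> q. \<alpha> + \<beta> \<le> w \<Longrightarrow> - int \<beta> \<le> q \<Longrightarrow> q \<le> int \<alpha> \<Longrightarrow>
      ladder_span n (Suc w) (M * ladder_term n \<alpha> \<beta> q)"
    and "ladder_span n w A"
  shows "ladder_span n (Suc w) (M * A)"
  using \<open>ladder_span n w A\<close>
proof (induction rule: ladder_span.induct)
  case (generator \<alpha> \<beta> q)
  then show ?case by (rule step)
next
  case (add A B)
  have "M * (A + B) = M * A + M * B"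
    using mult_add_distrib_mat[OF M ladder_span_carrier[OF add.hyps(1)] ladder_span_carrier[OF add.hyps(2)]] .
  then show ?case
    using add.IH by (simp add: ladder_span.add)
next
  case (smult A c)
  have "M * (c \<cdot>\<^sub>m A) = c \<cdot>\<^sub>m (M * A)"
    using mult_smult_distrib[OF M ladder_span_carrier[OF smult.hyps]] .
  then show ?case
    using smult.IH by (simp add: ladder_span.smult)
qed

definition lowering_mat :: "nat \<Rightarrow> complex mat" where
  "lowering_mat n = shift_mat n (- 1) real"

definition raising_mat :: "nat \<Rightarrow> complex mat" where
  "raising_mat n = shift_mat n 1 (\<lambda>b. real (n - b))"

definition weight_mat :: "nat \<Rightarrow> complex mat" where
  "weight_mat n = shift_mat n 0 real"

lemma lowering_mat_mult_ladder_term: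
  "lowering_mat n * ladder_term n \<alpha> \<beta> q =
    ladder_term n \<alpha> (Suc \<beta>) (q - 1) + complex_of_real (real \<alpha>) \<cdot>\<^sub>m ladder_term n (\<alpha> - 1) (Suc \<beta>) (q - 1)"
proof -
  have "lowering_mat n * ladder_term n \<alpha> \<beta> q = shift_mat n (q - 1) (\<lambda>b. real b *
      (falling_fact (real (n - nat (int b - 1))) \<alpha> * falling_fact (real (nat (int b - 1))) \<beta>))"
    unfolding lowering_mat_def ladder_term_def by (subst shift_mat_mult) (auto simp: algebra_simps)
  also have "\<dots> = shift_mat n (q - 1) (\<lambda>b. falling_fact (real (n - b)) \<alpha> * falling_fact (real b) (Suc \<beta>)
      + real \<alpha> * (falling_fact (real (n - b)) (\<alpha> - 1) * falling_fact (real b) (Suc \<beta>)))"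
  proof (rule shift_mat_cong)
    fix b assume b: "b \<le> n"
    show "real b * (falling_fact (real (n - nat (int b - 1))) \<alpha> * falling_fact (real (nat (int b - 1))) \<beta>) =
        falling_fact (real (n - b)) \<alpha> * falling_fact (real b) (Suc \<beta>)
        + real \<alpha> * (falling_fact (real (n - b)) (\<alpha> - 1) * falling_fact (real b) (Suc \<beta>))"
    proof (cases b)
      case 0
      then show ?thesis
        using falling_fact_of_nat_eq_0[of 0 "Suc \<beta>"] by simp
    next
      case (Suc b')
      then have e: "real (n - nat (int b - 1)) = real (n - b) + 1" "real (nat (int b - 1)) = real b - 1"
        using b by auto
      show ?thesis
        unfolding e falling_fact_plus_one falling_fact_Suc_left[of "real b" \<beta>] by (simp add: algebra_simps)
    qed
  qed
  finally show ?thesis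
    unfolding ladder_term_def shift_mat_smult shift_mat_add .
qed

lemma raising_mat_mult_ladder_term:
  "raising_mat n * ladder_term n \<alpha> \<beta> q =
    ladder_term n (Suc \<alpha>) \<beta> (q + 1) + complex_of_real (real \<beta>) \<cdot>\<^sub>m ladder_term n (Suc \<alpha>) (\<beta> - 1) (q + 1)"
proof -
  have "raising_mat n * ladder_term n \<alpha> \<beta> q = shift_mat n (q + 1) (\<lambda>b. real (n - b) *
      (falling_fact (real (n - nat (int b + 1))) \<alpha> * falling_fact (real (nat (int b + 1))) \<beta>))"
    unfolding raising_mat_def ladder_term_def by (subst shift_mat_mult) (auto simp: algebra_simps)
  also have "\<dots> = shift_mat n (q + 1) (\<lambda>b. falling_fact (real (n - b)) (Suc \<alpha>) * falling_fact (real b) \<beta>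
      + real \<beta> * (falling_fact (real (n - b)) (Suc \<alpha>) * falling_fact (real b) (\<beta> - 1)))"
  proof (rule shift_mat_cong)
    fix b assume b: "b \<le> n"
    show "real (n - b) * (falling_fact (real (n - nat (int b + 1))) \<alpha> * falling_fact (real (nat (int b + 1))) \<beta>) =
        falling_fact (real (n - b)) (Suc \<alpha>) * falling_fact (real b) \<beta>
        + real \<beta> * (falling_fact (real (n - b)) (Suc \<alpha>) * falling_fact (real b) (\<beta> - 1))"
    proof (cases "b = n")
      case True
      then show ?thesis
        using falling_fact_of_nat_eq_0[of 0 "Suc \<alpha>"] by simp
    next
      case False
      then have e: "real (n - nat (int b + 1)) = real (n - b) - 1" "real (nat (int b + 1)) = real b + 1"
        using b by auto
      show ?thesis
        unfolding e falling_fact_plus_one falling_fact_Suc_left[of "real (n - b)" \<alpha>] by (simp add: algebra_simps)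
    qed
  qed
  finally show ?thesis
    unfolding ladder_term_def shift_mat_smult shift_mat_add .
qed

lemma weight_mat_mult_ladder_term:
  "weight_mat n * ladder_term n \<alpha> \<beta> q =
    ladder_term n \<alpha> (Suc \<beta>) q + complex_of_real (real \<beta>) \<cdot>\<^sub>m ladder_term n \<alpha> \<beta> q"
proof -
  have "weight_mat n * ladder_term n \<alpha> \<beta> q =
      shift_mat n q (\<lambda>b. real b * (falling_fact (real (n - b)) \<alpha> * falling_fact (real b) \<beta>))"
    unfolding weight_mat_def ladder_term_def by (subst shift_mat_mult) auto
  also have "\<dots> = shift_mat n q (\<lambda>b. falling_fact (real (n - b)) \<alpha> * falling_fact (real b) (Suc \<beta>)
      + real \<beta> * (falling_fact (real (n - b)) \<alpha> * falling_fact (real b) \<beta>))"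
    by (rule shift_mat_cong) (simp add: falling_fact_Suc algebra_simps)
  finally show ?thesis
    unfolding ladder_term_def shift_mat_smult shift_mat_add .
qed

lemma ladder_span_lowering:
  assumes "ladder_span n w A"
  shows "ladder_span n (Suc w) (lowering_mat n * A)"
proof (rule ladder_span_mult_left[OF _ _ assms])
  show "lowering_mat n \<in> carrier_mat (n + 1) (n + 1)"
    unfolding lowering_mat_def by (rule shift_mat_carrier)
next
  fix \<alpha> \<beta> q assume "\<alpha> + \<beta> \<le> w" "- int \<beta> \<le> q" "q \<le> int \<alpha>"
  then show "ladder_span n (Suc w) (lowering_mat n * ladder_term n \<alpha> \<beta> q)"
    unfolding lowering_mat_mult_ladder_term by (intro ladder_span.intros) auto
qed

lemma ladder_span_raising:
  assumes "ladder_span n w A"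
  shows "ladder_span n (Suc w) (raising_mat n * A)"
proof (rule ladder_span_mult_left[OF _ _ assms])
  show "raising_mat n \<in> carrier_mat (n + 1) (n + 1)"
    unfolding raising_mat_def by (rule shift_mat_carrier)
next
  fix \<alpha> \<beta> q assume "\<alpha> + \<beta> \<le> w" "- int \<beta> \<le> q" "q \<le> int \<alpha>"
  then show "ladder_span n (Suc w) (raising_mat n * ladder_term n \<alpha> \<beta> q)"
    unfolding raising_mat_mult_ladder_term by (intro ladder_span.intros) auto
qed

lemma ladder_span_weight:
  assumes "ladder_span n w A"
  shows "ladder_span n (Suc w) (weight_mat n * A)"
proof (rule ladder_span_mult_left[OF _ _ assms])
  show "weight_mat n \<in> carrier_mat (n + 1) (n + 1)"
    unfolding weight_mat_def by (rule shift_mat_carrier)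
next
  fix \<alpha> \<beta> q assume "\<alpha> + \<beta> \<le> w" "- int \<beta> \<le> q" "q \<le> int \<alpha>"
  then show "ladder_span n (Suc w) (weight_mat n * ladder_term n \<alpha> \<beta> q)"
    unfolding weight_mat_mult_ladder_term by (intro ladder_span.intros) auto
qed

section \<open>Symmetrised single-qubit Paulis on weight states\<close>

lemma bit_imp_less_of_less_exp: "(u::nat) < 2 ^ n \<Longrightarrow> bit u i \<Longrightarrow> i < n"
proof -
  assume "u < 2 ^ n" "bit u i"
  then have "bit (take_bit n u) i"
    by (simp add: take_bit_nat_eq_self)
  then show "i < n"
    by (simp add: bit_take_bit_iff)
qed

lemma less_exp_of_bits_less: "(\<And>i. bit (u::nat) i \<Longrightarrow> i < n) \<Longrightarrow> u < 2 ^ n"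
proof -
  assume "\<And>i. bit (u::nat) i \<Longrightarrow> i < n"
  then have "take_bit n u = u"
    by (intro bit_eq_iff[THEN iffD2]) (auto simp: bit_take_bit_iff)
  then show ?thesis
    using take_bit_nat_less_exp[of n u] by simp
qed

lemma nat_eq_of_bits_eq:
  "(u::nat) < 2 ^ n \<Longrightarrow> v < 2 ^ n \<Longrightarrow> (\<And>i. i < n \<Longrightarrow> bit u i = bit v i) \<Longrightarrow> u = v"
  by (rule bit_eq_iff[THEN iffD2]) (meson bit_imp_less_of_less_exp)

definition of_bits :: "nat \<Rightarrow> (nat \<Rightarrow> bool) \<Rightarrow> nat" where
  "of_bits n g = horner_sum of_bool 2 (map g [0..<n])"

lemma of_bits_less_exp: "of_bits n g < 2 ^ n"
  unfolding of_bits_def using horner_sum_bound[of "map g [0..<n]"] by simp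

lemma bit_of_bits: "i < n \<Longrightarrow> bit (of_bits n g) i = g i"
  unfolding of_bits_def by (simp add: bit_horner_sum_bit_iff)

lemma flip_bit_less_exp: "(x::nat) < 2 ^ n \<Longrightarrow> j < n \<Longrightarrow> flip_bit j x < 2 ^ n"
  by (rule less_exp_of_bits_less)
    (auto simp: bit_flip_bit_iff dest: bit_imp_less_of_less_exp split: if_splits)

lemma hamming_weight_le: "hamming_weight n x \<le> n"
  unfolding hamming_weight_def by (rule le_trans[OF card_mono[of "{..<n}"]]) auto

lemma hamming_weight_flip_bit:
  assumes "j < n"
  shows "hamming_weight n (flip_bit j x) =
    (if bit x j then hamming_weight n x - 1 else hamming_weight n x + 1)"
proof -
  define S where "S = {i. i < n \<and> bit x i}"
  have "finite S" unfolding S_def by simp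
  moreover have "{i. i < n \<and> bit (flip_bit j x) i} = (if bit x j then S - {j} else insert j S)"
    unfolding S_def using assms by (auto simp: bit_flip_bit_iff)
  moreover have "bit x j \<longleftrightarrow> j \<in> S"
    unfolding S_def using assms by simp
  ultimately show ?thesis
    unfolding hamming_weight_def S_def[symmetric] by auto
qed

lemma sum_if_bit:
  "(\<Sum>l<n. if bit x l then A else B) = of_nat (hamming_weight n x) * A + of_nat (n - hamming_weight n x) * B"
proof -
  have "{l. l < n \<and> \<not> bit x l} = {..<n} - {l. l < n \<and> bit x l}"
    by auto
  moreover have "card ({..<n} - {l. l < n \<and> bit x l}) = n - card {l. l < n \<and> bit x l}"
    by (subst card_Diff_subset) auto
  ultimately have "card {l. l < n \<and> \<not> bit x l} = n - hamming_weight n x"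
    unfolding hamming_weight_def by simp
  moreover have "(\<Sum>l<n. if bit x l then A else B) =
      sum (\<lambda>_. A) {l. l < n \<and> bit x l} + sum (\<lambda>_. B) {l. l < n \<and> \<not> bit x l}"
    by (subst sum.If_cases) (simp_all add: Int_def lessThan_def conj_commute)
  ultimately show ?thesis
    unfolding hamming_weight_def by simp
qed

lemma card_hamming_weight_eq: "card {x. x < 2 ^ n \<and> hamming_weight n x = a} = n choose a"
proof -
  have "bij_betw (\<lambda>x. {i. i < n \<and> bit x i}) {x. x < 2 ^ n \<and> hamming_weight n x = a}
     {S. S \<subseteq> {..<n} \<and> card S = a}"
  proof (rule bij_betw_byWitness[where f' = "\<lambda>S. of_bits n (\<lambda>i. i \<in> S)"])
    show "\<forall>x\<in>{x. x < 2 ^ n \<and> hamming_weight n x = a}. of_bits n (\<lambda>i. i \<in> {i. i < n \<and> bit x i}) = x"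
      by (auto intro!: nat_eq_of_bits_eq of_bits_less_exp simp: bit_of_bits)
    show "\<forall>S\<in>{S. S \<subseteq> {..<n} \<and> card S = a}. {i. i < n \<and> bit (of_bits n (\<lambda>i. i \<in> S)) i} = S"
      by (auto simp: bit_of_bits)
    show "(\<lambda>x. {i. i < n \<and> bit x i}) ` {x. x < 2 ^ n \<and> hamming_weight n x = a} \<subseteq> {S. S \<subseteq> {..<n} \<and> card S = a}"
      by (auto simp: hamming_weight_def)
    have "{i. i < n \<and> bit (of_bits n (\<lambda>i. i \<in> S)) i} = S" if "S \<subseteq> {..<n}" for S
      using that by (auto simp: bit_of_bits)
    then show "(\<lambda>S. of_bits n (\<lambda>i. i \<in> S)) ` {S. S \<subseteq> {..<n} \<and> card S = a} \<subseteq> {x. x < 2 ^ n \<and> hamming_weight n x = a}"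
      by (auto simp: of_bits_less_exp hamming_weight_def)
  qed
  then show ?thesis
    using bij_betw_same_card n_subsets[of "{..<n}" a] by fastforce
qed

definition single_pauli :: "nat \<Rightarrow> nat \<Rightarrow> nat \<Rightarrow> nat" where
  "single_pauli j s = (\<lambda>i. if i = j then s else 0)"

lemma pauli_carrier [simp]: "pauli n p \<in> carrier_mat (2 ^ n) (2 ^ n)"
  by (simp add: pauli_def)

lemma pauli_single_entry:
  assumes "j < n" "x < 2 ^ n" "y < 2 ^ n"
  shows "pauli n (single_pauli j s) $$ (x, y) = pauli1 s (bit x j) (bit y j) *
     (if \<forall>i<n. i \<noteq> j \<longrightarrow> bit x i = bit y i then 1 else 0)"
proof -
  have "pauli n (single_pauli j s) $$ (x, y) = (\<Prod>i<n. pauli1 (single_pauli j s i) (bit x i) (bit y i))"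
    unfolding pauli_def using assms by simp
  also have "\<dots> = pauli1 s (bit x j) (bit y j) *
      (\<Prod>i\<in>{..<n} - {j}. pauli1 (single_pauli j s i) (bit x i) (bit y i))"
    using assms(1) by (simp add: prod.remove single_pauli_def)
  also have "(\<Prod>i\<in>{..<n} - {j}. pauli1 (single_pauli j s i) (bit x i) (bit y i)) =
      (\<Prod>i\<in>{..<n} - {j}. if bit x i = bit y i then 1 else 0)"
    by (rule prod.cong) (auto simp: single_pauli_def pauli1_def)
  also have "\<dots> = (if \<forall>i<n. i \<noteq> j \<longrightarrow> bit x i = bit y i then 1 else 0)"
  proof (cases "\<forall>i<n. i \<noteq> j \<longrightarrow> bit x i = bit y i")
    case True
    then show ?thesis by (auto intro: prod.neutral)
  next
    case False
    then obtain i where "i < n" "i \<noteq> j" "bit x i \<noteq> bit y i" by auto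
    then show ?thesis
      using False by (intro trans[OF prod_zero]) auto
  qed
  finally show ?thesis .
qed

lemma pauli_single_row_sum:
  assumes j: "j < n" and x: "x < 2 ^ n"
  shows "(\<Sum>y<2 ^ n. pauli n (single_pauli j s) $$ (x, y) * F y) =
    pauli1 s (bit x j) (bit x j) * F x + pauli1 s (bit x j) (\<not> bit x j) * F (flip_bit j x)"
proof -
  define x' where "x' = flip_bit j x"
  have "bit x' j \<noteq> bit x j"
    unfolding x'_def by (simp add: bit_flip_bit_iff)
  then have x': "x' < 2 ^ n" "x \<noteq> x'"
    using flip_bit_less_exp[OF x j] unfolding x'_def by auto
  have "pauli n (single_pauli j s) $$ (x, y) = 0" if "y < 2 ^ n" "y \<noteq> x" "y \<noteq> x'" for y
  proof -
    have "\<not> (\<forall>i<n. i \<noteq> j \<longrightarrow> bit x i = bit y i)"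
    proof
      assume agree: "\<forall>i<n. i \<noteq> j \<longrightarrow> bit x i = bit y i"
      show False
      proof (cases "bit y j = bit x j")
        case True
        then have "y = x"
          using agree by (intro nat_eq_of_bits_eq[OF that(1) x]) metis
        then show False using that by simp
      next
        case False
        then have "y = x'"
          using agree unfolding x'_def
          by (intro nat_eq_of_bits_eq[OF that(1) flip_bit_less_exp[OF x j]]) (auto simp: bit_flip_bit_iff)
        then show False using that by simp
      qed
    qed
    then show ?thesis
      unfolding pauli_single_entry[OF j x that(1)] by (simp only: if_False mult_zero_right)
  qed
  then have "(\<Sum>y<2 ^ n. pauli n (single_pauli j s) $$ (x, y) * F y) =
      (\<Sum>y\<in>{x, x'}. pauli n (single_pauli j s) $$ (x, y) * F y)"
    by (intro sum.mono_neutral_right) (use x x' in auto)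
  also have "\<dots> = pauli n (single_pauli j s) $$ (x, x) * F x + pauli n (single_pauli j s) $$ (x, x') * F x'"
    using x' by simp
  also have "pauli n (single_pauli j s) $$ (x, x) = pauli1 s (bit x j) (bit x j)"
    unfolding pauli_single_entry[OF j x x] by simp
  also have "pauli n (single_pauli j s) $$ (x, x') = pauli1 s (bit x j) (\<not> bit x j)"
    unfolding pauli_single_entry[OF j x x'(1)] by (simp add: x'_def bit_flip_bit_iff)
  finally show ?thesis
    unfolding x'_def .
qed

lemma index_mult_mat_single_row:
  assumes "A \<in> carrier_mat nr m" "B \<in> carrier_mat m nc" "i < nr" "j < nc"
    and "\<And>k. k < m \<Longrightarrow> A $$ (i, k) = (if k = s then c else 0)"
  shows "(A * B) $$ (i, j) = (if s < m then c * B $$ (s, j) else 0)"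
proof -
  have "(A * B) $$ (i, j) = (\<Sum>k\<in>{0..<m}. A $$ (i, k) * B $$ (k, j))"
    using assms(1-4) by (simp add: scalar_prod_def)
  also have "\<dots> = (\<Sum>k\<in>{0..<m}. if k = s then c * B $$ (s, j) else 0)"
    by (rule sum.cong) (auto simp: assms(5))
  finally show ?thesis by simp
qed

lemma index_mult_mat_single_col:
  assumes "A \<in> carrier_mat nr m" "B \<in> carrier_mat m nc" "i < nr" "j < nc"
    and "\<And>k. k < m \<Longrightarrow> B $$ (k, j) = (if k = s then c else 0)"
  shows "(A * B) $$ (i, j) = (if s < m then A $$ (i, s) * c else 0)"
proof -
  have "(A * B) $$ (i, j) = (\<Sum>k\<in>{0..<m}. A $$ (i, k) * B $$ (k, j))"
    using assms(1-4) by (simp add: scalar_prod_def)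
  also have "\<dots> = (\<Sum>k\<in>{0..<m}. if k = s then A $$ (i, s) * c else 0)"
    by (rule sum.cong) (auto simp: assms(5))
  finally show ?thesis by simp
qed

lemma mat_adjoint_carrier: "A \<in> carrier_mat nr nc \<Longrightarrow> mat_adjoint A \<in> carrier_mat nc nr"
  unfolding mat_adjoint_def by auto

lemma index_mat_adjoint: "i < dim_col A \<Longrightarrow> j < dim_row A \<Longrightarrow> mat_adjoint A $$ (i, j) = cnj (A $$ (j, i))"
  unfolding mat_adjoint_def by (simp add: mat_of_rows_index)

definition perm_bits :: "nat \<Rightarrow> (nat \<Rightarrow> nat) \<Rightarrow> nat \<Rightarrow> nat" where
  "perm_bits n \<sigma> x = of_bits n (\<lambda>i. bit x (\<sigma> i))"

lemma perm_bits_less_exp: "perm_bits n \<sigma> x < 2 ^ n"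
  unfolding perm_bits_def by (rule of_bits_less_exp)

lemma bit_perm_bits: "i < n \<Longrightarrow> bit (perm_bits n \<sigma> x) i = bit x (\<sigma> i)"
  unfolding perm_bits_def by (rule bit_of_bits)

lemma perm_mat_carrier [simp]: "perm_mat n \<sigma> \<in> carrier_mat (2 ^ n) (2 ^ n)"
  by (simp add: perm_mat_def)

lemma perm_mat_entry:
  assumes "u < 2 ^ n" "x < 2 ^ n"
  shows "perm_mat n \<sigma> $$ (u, x) = (if u = perm_bits n \<sigma> x then 1 else 0)"
proof -
  have "(\<forall>i<n. bit u i = bit x (\<sigma> i)) \<longleftrightarrow> u = perm_bits n \<sigma> x"
  proof
    assume "\<forall>i<n. bit u i = bit x (\<sigma> i)"
    then show "u = perm_bits n \<sigma> x"
      by (intro nat_eq_of_bits_eq[OF assms(1) perm_bits_less_exp]) (simp add: bit_perm_bits)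
  qed (simp add: bit_perm_bits)
  then show ?thesis
    unfolding perm_mat_def using assms by simp
qed

lemma perm_mat_conj_entry:
  assumes x: "x < 2 ^ n" and y: "y < 2 ^ n" and A: "A \<in> carrier_mat (2 ^ n) (2 ^ n)"
  shows "(mat_adjoint (perm_mat n \<sigma>) * A * perm_mat n \<sigma>) $$ (x, y) =
    A $$ (perm_bits n \<sigma> x, perm_bits n \<sigma> y)"
proof -
  have P': "mat_adjoint (perm_mat n \<sigma>) \<in> carrier_mat (2 ^ n) (2 ^ n)"
    by (rule mat_adjoint_carrier[OF perm_mat_carrier])
  have row: "mat_adjoint (perm_mat n \<sigma>) $$ (x, k) = (if k = perm_bits n \<sigma> x then 1 else 0)"
    if "k < 2 ^ n" for k
    using index_mat_adjoint[of x "perm_mat n \<sigma>" k] that x perm_mat_entry[OF that x]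
    by (simp add: perm_mat_def)
  have "(mat_adjoint (perm_mat n \<sigma>) * A * perm_mat n \<sigma>) $$ (x, y) =
      (mat_adjoint (perm_mat n \<sigma>) * A) $$ (x, perm_bits n \<sigma> y)"
    using index_mult_mat_single_col[OF mult_carrier_mat[OF P' A] perm_mat_carrier x y,
        where s = "perm_bits n \<sigma> y" and c = 1] perm_mat_entry[OF _ y] perm_bits_less_exp
    by simp
  also have "\<dots> = A $$ (perm_bits n \<sigma> x, perm_bits n \<sigma> y)"
    using index_mult_mat_single_row[OF P' A x perm_bits_less_exp row] perm_bits_less_exp by simp
  finally show ?thesis .
qed

lemma perm_mat_conj_single_pauli_entry:
  assumes \<sigma>: "\<sigma> permutes {..<n}" and j: "j < n" and x: "x < 2 ^ n" and y: "y < 2 ^ n"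
  shows "(mat_adjoint (perm_mat n \<sigma>) * pauli n (single_pauli j s) * perm_mat n \<sigma>) $$ (x, y) =
    pauli n (single_pauli (\<sigma> j) s) $$ (x, y)"
proof -
  have img: "\<sigma> ` ({..<n} - {j}) = {..<n} - {\<sigma> j}"
    using \<sigma> by (simp add: image_set_diff permutes_inj permutes_image)
  have "(\<forall>i\<in>{..<n} - {j}. bit x (\<sigma> i) = bit y (\<sigma> i)) \<longleftrightarrow> (\<forall>l\<in>{..<n} - {\<sigma> j}. bit x l = bit y l)"
    unfolding img[symmetric] Ball_image_comp by (simp add: comp_def)
  then have "(\<forall>i<n. i \<noteq> j \<longrightarrow> bit (perm_bits n \<sigma> x) i = bit (perm_bits n \<sigma> y) i) \<longleftrightarrow>
      (\<forall>l<n. l \<noteq> \<sigma> j \<longrightarrow> bit x l = bit y l)"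
    by (auto simp: bit_perm_bits)
  moreover have "\<sigma> j < n"
    using permutes_in_image[OF \<sigma>] j by simp
  ultimately show ?thesis
    unfolding perm_mat_conj_entry[OF x y pauli_carrier]
      pauli_single_entry[OF j perm_bits_less_exp perm_bits_less_exp] pauli_single_entry[OF \<open>\<sigma> j < n\<close> x y]
    using j by (simp add: bit_perm_bits)
qed

text \<open>Each position is hit by \<sigma> j for exactly (n - 1)! permutations \<sigma>; rather than counting,
  compare with the sum over all positions, which every permutation merely reorders.\<close>

lemma sum_permutes_apply:
  fixes F :: "nat \<Rightarrow> complex"
  assumes "j < n"
  shows "(\<Sum>\<sigma>\<in>{\<sigma>. \<sigma> permutes {..<n}}. F (\<sigma> j)) = of_nat (fact (n - 1)) * (\<Sum>l<n. F l)"
proof -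
  let ?P = "{\<sigma>. \<sigma> permutes {..<n}}"
  have orbit: "(\<Sum>\<sigma>\<in>?P. F (\<sigma> l)) = (\<Sum>\<sigma>\<in>?P. F (\<sigma> j))" if "l < n" for l
  proof -
    have "Transposition.transpose l j permutes {..<n}"
      using that assms by (intro permutes_swap_id) auto
    from sum_permutations_compose_right[OF this, of "\<lambda>\<sigma>. F (\<sigma> j)"] show ?thesis
      by simp
  qed
  have "of_nat n * (\<Sum>\<sigma>\<in>?P. F (\<sigma> j)) = (\<Sum>l<n. \<Sum>\<sigma>\<in>?P. F (\<sigma> j))"
    by simp
  also have "\<dots> = (\<Sum>l<n. \<Sum>\<sigma>\<in>?P. F (\<sigma> l))"
    by (rule sum.cong) (simp_all add: orbit)
  also have "\<dots> = (\<Sum>\<sigma>\<in>?P. \<Sum>l<n. F (\<sigma> l))"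
    by (rule sum.swap)
  also have "\<dots> = (\<Sum>\<sigma>\<in>?P. \<Sum>l<n. F l)"
    by (rule sum.cong) (auto simp: sum.permute[of _ "{..<n}" F] comp_def)
  also have "\<dots> = of_nat (fact n) * (\<Sum>l<n. F l)"
    using card_permutations[of "{..<n}" n] by simp
  finally have eq: "of_nat n * (\<Sum>\<sigma>\<in>?P. F (\<sigma> j)) = of_nat (fact n) * (\<Sum>l<n. F l)" .
  obtain m where m: "n = Suc m"
    using assms by (cases n) auto
  have "of_nat (fact n) = of_nat n * (of_nat (fact (n - 1)) :: complex)"
    unfolding m by (simp add: algebra_simps)
  then show ?thesis
    using eq by (simp add: mult.assoc m del: of_nat_Suc)
qed

lemma Sym_single_pauli_entry:
  assumes j: "j < n" and x: "x < 2 ^ n" and y: "y < 2 ^ n"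
  shows "Sym n (pauli n (single_pauli j s)) $$ (x, y) = (\<Sum>l<n. pauli n (single_pauli l s) $$ (x, y)) / of_nat n"
proof -
  have "Sym n (pauli n (single_pauli j s)) $$ (x, y) =
      1 / fact n * (\<Sum>\<sigma>\<in>{\<sigma>. \<sigma> permutes {..<n}}. pauli n (single_pauli (\<sigma> j) s) $$ (x, y))"
    unfolding Sym_def using x y by (simp add: perm_mat_conj_single_pauli_entry[OF _ j x y])
  also have "\<dots> = 1 / fact n * of_nat (fact (n - 1)) * (\<Sum>l<n. pauli n (single_pauli l s) $$ (x, y))"
    by (simp only: sum_permutes_apply[OF j, of "\<lambda>l. pauli n (single_pauli l s) $$ (x, y)"] mult.assoc)
  also have "1 / fact n * of_nat (fact (n - 1)) = (1 / of_nat n :: complex)"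
  proof -
    obtain m where m: "n = Suc m"
      using j by (cases n) auto
    then have "(fact n :: complex) = of_nat n * fact m" and "of_nat (fact (n - 1)) = (fact m :: complex)"
      by (simp_all del: of_nat_Suc)
    then show ?thesis
      by (simp add: nonzero_divide_mult_cancel_right)
  qed
  finally show ?thesis
    by simp
qed

definition weight_indicator :: "nat \<Rightarrow> complex mat" where
  "weight_indicator n = mat (2 ^ n) (n + 1) (\<lambda>(x, a). if hamming_weight n x = a then 1 else 0)"

lemma weight_indicator_carrier [simp]: "weight_indicator n \<in> carrier_mat (2 ^ n) (n + 1)"
  by (simp add: weight_indicator_def)

text \<open>The collective Pauli operator sum_l sigma_s^(l), i.e. twice the total spin component
  J_x, J_y, J_z for s = 1, 2, 3, acting on the weight basis.\<close>

definition spin_op :: "nat \<Rightarrow> nat \<Rightarrow> complex mat" where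
  "spin_op n s =
    (if s = 1 then lowering_mat n + raising_mat n
     else if s = 2 then \<i> \<cdot>\<^sub>m lowering_mat n + (- \<i>) \<cdot>\<^sub>m raising_mat n
     else of_nat n \<cdot>\<^sub>m 1\<^sub>m (n + 1) + (- 2) \<cdot>\<^sub>m weight_mat n)"

lemma spin_op_carrier [simp]: "spin_op n s \<in> carrier_mat (n + 1) (n + 1)"
  by (simp add: spin_op_def lowering_mat_def raising_mat_def weight_mat_def shift_mat_def)

lemma spin_op_entry:
  assumes "b \<le> n" "a \<le> n" "s \<in> {1, 2, 3}"
  shows "spin_op n s $$ (b, a) =
     of_nat b * (pauli1 s True True * (if b = a then 1 else 0) + pauli1 s True False * (if b - 1 = a then 1 else 0))
   + of_nat (n - b) * (pauli1 s False False * (if b = a then 1 else 0) + pauli1 s False True * (if b + 1 = a then 1 else 0))"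
  using assms
  by (auto simp: spin_op_def lowering_mat_def raising_mat_def weight_mat_def shift_mat_def
      pauli1_def of_nat_diff algebra_simps)

lemma collective_pauli_weight_indicator:
  assumes x: "x < 2 ^ n" and a: "a \<le> n" and s: "s \<in> {1, 2, 3}"
  shows "(\<Sum>l<n. \<Sum>y<2 ^ n. pauli n (single_pauli l s) $$ (x, y) * weight_indicator n $$ (y, a)) =
    spin_op n s $$ (hamming_weight n x, a)"
proof -
  have "(\<Sum>y<2 ^ n. pauli n (single_pauli l s) $$ (x, y) * weight_indicator n $$ (y, a)) =
      (if bit x l then
        pauli1 s True True * (if hamming_weight n x = a then 1 else 0)
        + pauli1 s True False * (if hamming_weight n x - 1 = a then 1 else 0)
      else pauli1 s False False * (if hamming_weight n x = a then 1 else 0)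
        + pauli1 s False True * (if hamming_weight n x + 1 = a then 1 else 0))"
    if l: "l < n" for l
  proof -
    have "(\<Sum>y<2 ^ n. pauli n (single_pauli l s) $$ (x, y) * weight_indicator n $$ (y, a)) =
        (\<Sum>y<2 ^ n. pauli n (single_pauli l s) $$ (x, y) * (if hamming_weight n y = a then 1 else 0))"
      by (rule sum.cong) (use a in \<open>simp_all add: weight_indicator_def\<close>)
    then show ?thesis
      unfolding pauli_single_row_sum[OF l x] using l by (simp add: hamming_weight_flip_bit)
  qed
  then have "(\<Sum>l<n. \<Sum>y<2 ^ n. pauli n (single_pauli l s) $$ (x, y) * weight_indicator n $$ (y, a)) =
      (\<Sum>l<n. if bit x l then
        pauli1 s True True * (if hamming_weight n x = a then 1 else 0)
        + pauli1 s True False * (if hamming_weight n x - 1 = a then 1 else 0)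
      else pauli1 s False False * (if hamming_weight n x = a then 1 else 0)
        + pauli1 s False True * (if hamming_weight n x + 1 = a then 1 else 0))"
    by (intro sum.cong) simp_all
  also have "\<dots> = spin_op n s $$ (hamming_weight n x, a)"
    unfolding sum_if_bit by (rule spin_op_entry[OF hamming_weight_le a s, symmetric])
  finally show ?thesis .
qed

lemma Sym_single_pauli_weight_indicator:
  assumes j: "j < n" and s: "s \<in> {1, 2, 3}"
  shows "Sym n (pauli n (single_pauli j s)) * weight_indicator n =
    weight_indicator n * ((1 / of_nat n) \<cdot>\<^sub>m spin_op n s)"
proof (rule eq_matI)
  fix x a
  assume "x < dim_row (weight_indicator n * ((1 / of_nat n) \<cdot>\<^sub>m spin_op n s))"
    and "a < dim_col (weight_indicator n * ((1 / of_nat n) \<cdot>\<^sub>m spin_op n s))"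
  then have x: "x < 2 ^ n" and a: "a \<le> n"
    by (simp_all add: weight_indicator_def carrier_matD[OF spin_op_carrier])
  have row: "weight_indicator n $$ (x, c) = (if c = hamming_weight n x then 1 else 0)" if "c < n + 1" for c
    using that x by (auto simp: weight_indicator_def)
  have "(Sym n (pauli n (single_pauli j s)) * weight_indicator n) $$ (x, a) =
      (\<Sum>y<2 ^ n. Sym n (pauli n (single_pauli j s)) $$ (x, y) * weight_indicator n $$ (y, a))"
    using x a by (simp add: scalar_prod_def Sym_def weight_indicator_def atLeast0LessThan)
  also have "\<dots> = (\<Sum>y<2 ^ n. (\<Sum>l<n. pauli n (single_pauli l s) $$ (x, y) * weight_indicator n $$ (y, a)) / of_nat n)"
    by (rule sum.cong) (simp_all add: Sym_single_pauli_entry[OF j x] sum_distrib_right)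
  also have "\<dots> = (\<Sum>l<n. \<Sum>y<2 ^ n. pauli n (single_pauli l s) $$ (x, y) * weight_indicator n $$ (y, a)) / of_nat n"
    by (simp add: sum_divide_distrib sum.swap[of _ "{..<n}"])
  also have "\<dots> = 1 / of_nat n * spin_op n s $$ (hamming_weight n x, a)"
    by (simp add: collective_pauli_weight_indicator[OF x a s])
  also have "\<dots> = (weight_indicator n * ((1 / of_nat n) \<cdot>\<^sub>m spin_op n s)) $$ (x, a)"
    using index_mult_mat_single_row[OF weight_indicator_carrier smult_carrier_mat[OF spin_op_carrier] x _ row]
      hamming_weight_le[of n x] a by (simp add: carrier_matD[OF spin_op_carrier])
  finally show "(Sym n (pauli n (single_pauli j s)) * weight_indicator n) $$ (x, a) =
      (weight_indicator n * ((1 / of_nat n) \<cdot>\<^sub>m spin_op n s)) $$ (x, a)" .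
qed (simp_all add: Sym_def weight_indicator_def carrier_matD[OF spin_op_carrier])

lemma ladder_span_spin_op:
  assumes A: "ladder_span n w A"
  shows "ladder_span n (Suc w) (spin_op n s * A)"
proof -
  have A': "A \<in> carrier_mat (n + 1) (n + 1)"
    by (rule ladder_span_carrier[OF A])
  have L: "lowering_mat n \<in> carrier_mat (n + 1) (n + 1)" and R: "raising_mat n \<in> carrier_mat (n + 1) (n + 1)"
    and N: "weight_mat n \<in> carrier_mat (n + 1) (n + 1)"
    unfolding lowering_mat_def raising_mat_def weight_mat_def by (rule shift_mat_carrier)+
  consider "s = 1" | "s = 2" | "s \<noteq> 1" "s \<noteq> 2" by blast
  then show ?thesis
  proof cases
    case 1
    then have "spin_op n s * A = lowering_mat n * A + raising_mat n * A"
      unfolding spin_op_def using add_mult_distrib_mat[OF L R A'] by simp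
    then show ?thesis
      using ladder_span_lowering[OF A] ladder_span_raising[OF A] by (simp add: ladder_span.add)
  next
    case 2
    then have "spin_op n s * A = \<i> \<cdot>\<^sub>m (lowering_mat n * A) + (- \<i>) \<cdot>\<^sub>m (raising_mat n * A)"
      unfolding spin_op_def
      using add_mult_distrib_mat[OF smult_carrier_mat[OF L] smult_carrier_mat[OF R] A']
        mult_smult_assoc_mat[OF L A'] mult_smult_assoc_mat[OF R A'] by simp
    then show ?thesis
      using ladder_span_lowering[OF A] ladder_span_raising[OF A] by (simp add: ladder_span.add ladder_span.smult)
  next
    case 3
    then have "spin_op n s * A = of_nat n \<cdot>\<^sub>m A + (- 2) \<cdot>\<^sub>m (weight_mat n * A)"
      unfolding spin_op_def
      using add_mult_distrib_mat[OF smult_carrier_mat[OF one_carrier_mat] smult_carrier_mat[OF N] A']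
        mult_smult_assoc_mat[OF one_carrier_mat A'] mult_smult_assoc_mat[OF N A'] A' by simp
    then show ?thesis
      using ladder_span_weight[OF A] ladder_span_mono[OF A, of "Suc w"]
      by (simp add: ladder_span.add ladder_span.smult)
  qed
qed

lemma Sym_carrier: "Sym n A \<in> carrier_mat (2 ^ n) (2 ^ n)"
  by (simp add: Sym_def)

lemma foldr_mult_carrier: "(\<And>i. f i \<in> carrier_mat N N) \<Longrightarrow> foldr (\<lambda>i M. f i * M) L (1\<^sub>m N) \<in> carrier_mat N N"
  by (induction L) (auto intro: mult_carrier_mat)

lemma Sym_pauli_product_weight_indicator:
  assumes "\<forall>i\<in>set L. i < n \<and> p i \<in> {1, 2, 3}"
  shows "\<exists>M. foldr (\<lambda>i M. Sym n (pauli n (single_pauli i (p i))) * M) L (1\<^sub>m (2 ^ n)) * weight_indicator n =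
      weight_indicator n * M \<and> ladder_span n (length L) M"
  using assms
proof (induction L)
  case Nil
  have "1\<^sub>m (2 ^ n) * weight_indicator n = weight_indicator n * 1\<^sub>m (n + 1)"
    by (metis weight_indicator_carrier left_mult_one_mat right_mult_one_mat)
  then show ?case
    using ladder_span_one[of n] by auto
next
  case (Cons i L)
  let ?S = "Sym n (pauli n (single_pauli i (p i)))"
  let ?R = "foldr (\<lambda>i M. Sym n (pauli n (single_pauli i (p i))) * M) L (1\<^sub>m (2 ^ n))"
  obtain M where M: "?R * weight_indicator n = weight_indicator n * M" "ladder_span n (length L) M"
    using Cons by auto
  have i: "i < n" "p i \<in> {1, 2, 3}"
    using Cons.prems by auto
  have S: "?S \<in> carrier_mat (2 ^ n) (2 ^ n)"
    by (rule Sym_carrier)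
  have R: "?R \<in> carrier_mat (2 ^ n) (2 ^ n)"
    by (rule foldr_mult_carrier) (rule Sym_carrier)
  have Mc: "M \<in> carrier_mat (n + 1) (n + 1)"
    by (rule ladder_span_carrier[OF M(2)])
  have J: "(1 / of_nat n) \<cdot>\<^sub>m spin_op n (p i) \<in> carrier_mat (n + 1) (n + 1)"
    by (rule smult_carrier_mat[OF spin_op_carrier])
  have "?S * ?R * weight_indicator n = ?S * (?R * weight_indicator n)"
    by (rule assoc_mult_mat[OF S R weight_indicator_carrier])
  also have "\<dots> = ?S * weight_indicator n * M"
    unfolding M(1) by (rule assoc_mult_mat[OF S weight_indicator_carrier Mc, symmetric])
  also have "\<dots> = weight_indicator n * ((1 / of_nat n) \<cdot>\<^sub>m spin_op n (p i) * M)"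
    unfolding Sym_single_pauli_weight_indicator[OF i]
    by (rule assoc_mult_mat[OF weight_indicator_carrier J Mc])
  also have "\<dots> = weight_indicator n * ((1 / of_nat n) \<cdot>\<^sub>m (spin_op n (p i) * M))"
    by (simp only: mult_smult_assoc_mat[OF spin_op_carrier Mc])
  finally show ?case
    using ladder_span.smult[OF ladder_span_spin_op[OF M(2)]] by auto
qed

lemma Sph_carrier: "Sph n p \<in> carrier_mat (2 ^ n) (2 ^ n)"
  unfolding Sph_def by (rule foldr_mult_carrier) (rule Sym_carrier)

lemma pauli_weight_le: "pauli_weight n p \<le> n"
  unfolding pauli_weight_def pauli_support_def by (rule le_trans[OF card_mono[of "{..<n}"]]) auto

lemma Sph_weight_indicator:
  assumes "is_pauli n p"
  shows "\<exists>M. Sph n p * weight_indicator n = weight_indicator n * M \<and> ladder_span n (pauli_weight n p) M"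
proof -
  define L where "L = sorted_list_of_set (pauli_support n p)"
  have fin: "finite (pauli_support n p)"
    unfolding pauli_support_def by simp
  have L: "\<forall>i\<in>set L. i < n \<and> p i \<in> {1, 2, 3}"
    using assms fin unfolding L_def pauli_support_def is_pauli_def by auto
  have len: "pauli_weight n p = length L"
    unfolding L_def pauli_weight_def using fin by simp
  have eq: "Sph n p = foldr (\<lambda>i M. Sym n (pauli n (single_pauli i (p i))) * M) L (1\<^sub>m (2 ^ n))"
    unfolding Sph_def L_def single_pauli_def ..
  show ?thesis
    unfolding eq len by (rule Sym_pauli_product_weight_indicator[OF L])
qed

section \<open>The Dicke mapping\<close>

lemma dicke_map_carrier: "dicke_map n \<in> carrier_mat (2 ^ n) (n + 1)"
  by (simp add: dicke_map_def)

lemma adjoint_dicke_map_carrier: "mat_adjoint (dicke_map n) \<in> carrier_mat (n + 1) (2 ^ n)"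
  by (rule mat_adjoint_carrier[OF dicke_map_carrier])

lemma dicke_map_eq:
  "dicke_map n = weight_indicator n * mat_diag (n + 1) (\<lambda>a. complex_of_real (1 / sqrt (real (n choose a))))"
  unfolding mat_diag_mult_right[OF weight_indicator_carrier]
  by (rule eq_matI) (auto simp: dicke_map_def dicke_vec_def weight_indicator_def)

lemma adjoint_dicke_map_weight_indicator:
  "mat_adjoint (dicke_map n) * weight_indicator n =
    mat_diag (n + 1) (\<lambda>a. complex_of_real (sqrt (real (n choose a))))"
proof (rule eq_matI)
  fix b c
  assume "b < dim_row (mat_diag (n + 1) (\<lambda>a. complex_of_real (sqrt (real (n choose a)))))"
    and "c < dim_col (mat_diag (n + 1) (\<lambda>a. complex_of_real (sqrt (real (n choose a)))))"
  then have b: "b \<le> n" and c: "c \<le> n" by (simp_all add: mat_diag_def)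
  define v where "v = (if b = c then complex_of_real (1 / sqrt (real (n choose b))) else 0)"
  have "(mat_adjoint (dicke_map n) * weight_indicator n) $$ (b, c) =
      (\<Sum>x\<in>{0..<2 ^ n}. mat_adjoint (dicke_map n) $$ (b, x) * weight_indicator n $$ (x, c))"
    using b c by (simp add: scalar_prod_def weight_indicator_def carrier_matD[OF adjoint_dicke_map_carrier])
  also have "\<dots> = (\<Sum>x\<in>{0..<2 ^ n}. if hamming_weight n x = b then v else 0)"
  proof (rule sum.cong)
    fix x :: nat assume "x \<in> {0..<2 ^ n}"
    then have "mat_adjoint (dicke_map n) $$ (b, x) = cnj (dicke_map n $$ (x, b))"
      using index_mat_adjoint[of b "dicke_map n" x] b by (simp add: dicke_map_def)
    then show "mat_adjoint (dicke_map n) $$ (b, x) * weight_indicator n $$ (x, c) =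
        (if hamming_weight n x = b then v else 0)"
      using \<open>x \<in> _\<close> b c by (simp add: v_def dicke_map_def dicke_vec_def weight_indicator_def)
  qed simp
  also have "\<dots> = of_nat (card {x. x < 2 ^ n \<and> hamming_weight n x = b}) * v"
    by (simp add: sum.If_cases Int_def atLeast0LessThan lessThan_def conj_commute)
  also have "\<dots> = mat_diag (n + 1) (\<lambda>a. complex_of_real (sqrt (real (n choose a)))) $$ (b, c)"
  proof -
    have "real (n choose b) * (1 / sqrt (real (n choose b))) = sqrt (real (n choose b))"
      using b by (simp add: real_div_sqrt)
    then have "of_nat (n choose b) * complex_of_real (1 / sqrt (real (n choose b))) =
        complex_of_real (sqrt (real (n choose b)))"
      by (metis of_real_mult of_real_of_nat_eq)
    then show ?thesis
      unfolding card_hamming_weight_eq v_def using b c by (auto simp: mat_diag_def)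
  qed
  finally show "(mat_adjoint (dicke_map n) * weight_indicator n) $$ (b, c) =
      mat_diag (n + 1) (\<lambda>a. complex_of_real (sqrt (real (n choose a)))) $$ (b, c)" .
qed (simp_all add: mat_diag_def dicke_map_def mat_adjoint_def weight_indicator_def)

lemma dicke_conj_eq_binom_rescale:
  assumes S: "S \<in> carrier_mat (2 ^ n) (2 ^ n)" and M: "M \<in> carrier_mat (n + 1) (n + 1)"
    and SM: "S * weight_indicator n = weight_indicator n * M"
  shows "mat_adjoint (dicke_map n) * S * dicke_map n = binom_rescale n M"
proof -
  let ?D = "mat_diag (n + 1) (\<lambda>a. complex_of_real (1 / sqrt (real (n choose a))))"
  let ?E = "weight_indicator n"
  note A = adjoint_dicke_map_carrier[of n]
  have D: "?D \<in> carrier_mat (n + 1) (n + 1)"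
    by (rule mat_diag_dim)
  have "mat_adjoint (dicke_map n) * S * dicke_map n = mat_adjoint (dicke_map n) * (S * dicke_map n)"
    by (rule assoc_mult_mat[OF A S dicke_map_carrier])
  also have "S * dicke_map n = (S * ?E) * ?D"
    unfolding dicke_map_eq by (rule assoc_mult_mat[OF S weight_indicator_carrier D, symmetric])
  also have "\<dots> = ?E * (M * ?D)"
    unfolding SM by (rule assoc_mult_mat[OF weight_indicator_carrier M D])
  also have "mat_adjoint (dicke_map n) * (?E * (M * ?D)) = (mat_adjoint (dicke_map n) * ?E) * (M * ?D)"
    by (rule assoc_mult_mat[OF A weight_indicator_carrier mult_carrier_mat[OF M D], symmetric])
  also have "\<dots> = binom_rescale n M"
    unfolding adjoint_dicke_map_weight_indicator mat_diag_mult_right[OF M] mat_diag_mult_left[OF mat_carrier]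
    by (rule eq_matI) (auto simp: binom_rescale_def of_real_mult[symmetric] of_real_divide)
  finally show ?thesis .
qed

lemma spin_code_subset_carrier: "spin_code n K d C \<Longrightarrow> C \<subseteq> carrier_vec (n + 1)"
  unfolding spin_code_def
  using LinearCombinations.submodule.subset[OF subspace.submod] by (force simp: module_vec_simps)

lemma spin_code_KL_condition:
  "spin_code n K d C \<Longrightarrow> k < d \<Longrightarrow> \<bar>q\<bar> \<le> int k \<Longrightarrow> KL_condition C (sph_tensor n k q)"
  unfolding spin_code_def KL_condition_def by blast

theorem lemmaS7:
  fixes n K d :: nat and C :: "complex vec set" and p :: "nat \<Rightarrow> nat"
  assumes "spin_code n K d C"
    and "is_pauli n p"
    and "pauli_weight n p < d"
  shows "\<exists>c. \<forall>u\<in>C. \<forall>v\<in>C.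
           braket u ((mat_adjoint (dicke_map n) * Sph n p * dicke_map n) *\<^sub>v v) = c * braket u v"
proof -
  obtain M where M: "Sph n p * weight_indicator n = weight_indicator n * M"
    "ladder_span n (pauli_weight n p) M"
    using Sph_weight_indicator[OF assms(2)] by blast
  have "KL_condition C (binom_rescale n M)"
    using KL_condition_ladder_span[OF spin_code_subset_carrier[OF assms(1)] _ pauli_weight_le M(2)]
      spin_code_KL_condition[OF assms(1)] assms(3) by simp
  moreover have "mat_adjoint (dicke_map n) * Sph n p * dicke_map n = binom_rescale n M"
    by (rule dicke_conj_eq_binom_rescale[OF Sph_carrier ladder_span_carrier[OF M(2)] M(1)])
  ultimately show ?thesis
    unfolding KL_condition_def by simp
qed

end
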